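(* Let $T\in\mathcal{T}_{\mathrm{hom}}$ and suppose there exists a $p,q$-invariant open tube $U$ for $T$ with winding number $k$ and jumping number $l$. Then $$\rho_T=\frac{k}{q}\,\omega+\frac{l}{pq}\bmod1.$$ Conversely, the numbers $p,q,k,l$ associated in this way to an invariant open tube are uniquely determined by $\omega$ and $\rho_T$.
   Context: $\mathbb{T}^1=\mathbb{R}/\mathbb{Z}$, $\mathbb{T}^2=\mathbb{T}^1\times\mathbb{T}^1$, $\omega\in[0,1)$ irrational, $\pi$ the natural projections $\mathbb{R}^2\to\mathbb{T}^2$, $\mathbb{T}^1\times\mathbb{R}\to\mathbb{T}^2$. $\mathcal{T}_{\mathrm{hom}}$: continuous maps $T(\theta,x)=(\theta+\omega,T_\theta(x))$ on $\mathbb{T}^2$, homotopic to the identity, with orientation-preserving homeomorphic fibre maps; a lift of $T$ is a continuous $\hat T$ on $\mathbb{R}^2$ (or $\mathbb{T}^1\times\mathbb{R}$) with $\pi\circ\hat T=T\circ\pi$. Fibrewise rotation number: for a lift $\hat T$ to $\mathbb{T}^1\times\mathbb{R}$, $\rho_T:=\lim_{n\to\infty}\frac1n(\hat T^n_\theta(\hat x)-\hat x)\bmod1$ (exists, independent of $\theta,\hat x$ and lift). $q$-curve: point set $\{(\hat\theta\bmod1,\hat\gamma(\hat\theta)\bmod1):\hat\theta\in\mathbb{R}\}$ of a continuous $\hat\gamma:\mathbb{R}\to\mathbb{R}$ with $\hat\gamma(\hat\theta+q)-\hat\gamma(\hat\theta)=k\in\mathbb{Z}$ for all $\hat\theta$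 and $\hat\gamma(\hat\theta+l)-\hat\gamma(\hat\theta)\notin\mathbb{Z}$ for $1\le l<q$; such $\hat\gamma$ are its lifts (determined by their value at $0$), $k$ is its winding number; it meets each fibre in $q$ points $\gamma_1(\theta),\dots,\gamma_q(\theta)$. Invariant open tubes: an open $T$-invariant set $U\subseteq\mathbb{T}^2$ is a $1,q$-invariant open tube if each fibre $U_\theta$ consists of $q$ disjoint nonempty open intervals and $U$ is connected. If $U^1$ is a $1,q$-invariant open tube for $T^p$ and $U^i:=T^{i-1}(U^1)$, $i=1,\dots,p$, are pairwise disjoint, then $U=\bigcup_{i=1}^pU^i$ is a $p,q$-invariant open tube. Each $U^i$ contains a $q$-curve $\gamma^i$ such that each of the $q$ intervals of $U^i_\theta$ contains exactly one of $\gamma^i_1(\theta),\dots,\gamma^i_q(\theta)$; all $\gamma^i$ have the same winding number $k$, the winding number of $U$. Jumping number of $U$: label lifts $\hat x^i_j\in[0,1)$ of $\gamma^i_j(0)$ so that $\hat x^1_1<\hat x^2_1<\dots<\hat x^p_1<\hat x^1_2<\dots<\hat x^p_q$ (possible); let $\hat\gamma^i_j$ be the lift of $\gamma^i$ with $\hat\gamma^i_j(0)=\hat x^i_j$, and $\hat U^i_j$ the connected component of $\pi^{-1}(U^i)\subseteq\mathbb{R}^2$ containing the graph of $\hat\gamma^i_j$. There are unique $0\le m\le p-1$, $0\le n\le q-1$ and a lift $\hat T:\mathbb{R}^2\to\mathbb{R}^2$ of $T$, $\hat T(\hat\theta,\hat x)=(\hat\theta+\omega,\cdot)$, with $\hat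 T(\hat U^1_1)=\hat U^{1+m}_{1+n}$; the jumping number is $l:=m+np$. *)

theory Defs
  imports "HOL-Analysis.Analysis"
begin

text \<open>The circle T^1 = R/Z is realised as the unit circle in the complex plane via
  t \<mapsto> exp(2 pi i t); the torus T^2 as the product of two unit circles.\<close>

definition circ :: "real \<Rightarrow> complex" where
  "circ t = exp (2 * of_real pi * \<i> * of_real t)"

definition S1 :: "complex set" where
  "S1 = sphere 0 1"

definition torus :: "(complex \<times> complex) set" where
  "torus = S1 \<times> S1"

definition pi2 :: "real \<times> real \<Rightarrow> complex \<times> complex" where
  "pi2 v = (circ (fst v), circ (snd v))"

definition tfibre :: "(complex \<times> complex) set \<Rightarrow> complex \<Rightarrow> complex set" where
  "tfibre U z = {w. (z, w) \<in> U}"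

definition circle_op_homeo :: "(complex \<Rightarrow> complex) \<Rightarrow> bool" where
  "circle_op_homeo f \<longleftrightarrow>
     (\<exists>f'. homeomorphism S1 S1 f f') \<and>
     (\<exists>h::real \<Rightarrow> real. continuous_on UNIV h \<and> strict_mono h \<and> (\<forall>x. f (circ x) = circ (h x)))"

definition T_hom :: "real \<Rightarrow> (complex \<times> complex \<Rightarrow> complex \<times> complex) \<Rightarrow> bool" where
  "T_hom \<omega> T \<longleftrightarrow>
     continuous_on torus T \<and> T ` torus \<subseteq> torus \<and>
     (\<forall>\<theta> w. w \<in> S1 \<longrightarrow> fst (T (circ \<theta>, w)) = circ (\<theta> + \<omega>)) \<and>
     homotopic_with_canon (\<lambda>_. True) torus torus T id \<and>
     (\<forall>z\<in>S1. circle_op_homeo (\<lambda>w. snd (T (z, w))))"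

definition is_lift :: "(complex \<times> complex \<Rightarrow> complex \<times> complex) \<Rightarrow> (real \<times> real \<Rightarrow> real \<times> real) \<Rightarrow> bool" where
  "is_lift T F \<longleftrightarrow> continuous_on UNIV F \<and> (\<forall>v. pi2 (F v) = T (pi2 v))"

definition rot_num :: "(complex \<times> complex \<Rightarrow> complex \<times> complex) \<Rightarrow> real" where
  "rot_num T = (THE \<rho>. \<exists>F. is_lift T F \<and>
     (\<exists>r. frac r = \<rho> \<and>
        (\<forall>\<theta> x. (\<lambda>n. (snd ((F ^^ n) (\<theta>, x)) - x) / real n) \<longlonglongrightarrow> r)))"

definition qcurve_lift :: "nat \<Rightarrow> int \<Rightarrow> (complex \<times> complex) set \<Rightarrow> (real \<Rightarrow> real) \<Rightarrow> bool" where
  "qcurve_lift q k C g \<longleftrightarrow>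
     continuous_on UNIV g \<and>
     (\<forall>t. g (t + real q) - g t = of_int k) \<and>
     (\<forall>j\<in>{1..<q}. \<forall>t. g (t + real j) - g t \<notin> \<int>) \<and>
     C = (\<lambda>t. pi2 (t, g t)) ` UNIV"

definition q_arcs :: "nat \<Rightarrow> complex set \<Rightarrow> bool" where
  "q_arcs q A \<longleftrightarrow>
     (\<exists>a b :: nat \<Rightarrow> real.
        (\<forall>i<q. a i < b i \<and> b i \<le> a i + 1) \<and>
        disjoint_family_on (\<lambda>i. circ ` {a i<..<b i}) {..<q} \<and>
        A = (\<Union>i<q. circ ` {a i<..<b i}))"

definition tube1 :: "(complex \<times> complex \<Rightarrow> complex \<times> complex) \<Rightarrow> nat \<Rightarrow> (complex \<times> complex) set \<Rightarrow> bool" where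
  "tube1 S q U \<longleftrightarrow>
     0 < q \<and> U \<subseteq> torus \<and> openin (top_of_set torus) U \<and> S ` U = U \<and> connected U \<and>
     (\<forall>z\<in>S1. q_arcs q (tfibre U z))"

text \<open>p,q-invariant open tube for T with first piece U1; the tube is
  U = (\<Union>i<p. (T^^i) ` U1), the pieces being U^(i+1) = (T^^i) ` U1.\<close>
definition pq_tube :: "(complex \<times> complex \<Rightarrow> complex \<times> complex) \<Rightarrow> nat \<Rightarrow> nat \<Rightarrow> (complex \<times> complex) set \<Rightarrow> bool" where
  "pq_tube T p q U1 \<longleftrightarrow>
     0 < p \<and> tube1 (T ^^ p) q U1 \<and>
     disjoint_family_on (\<lambda>i. (T ^^ i) ` U1) {..<p}"

text \<open>The p,q-invariant open tube with first piece U1 has winding number k and jumping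
  number l (indices 0-based: piece i is (T^^i) ` U1, lift h i j corresponds to
  the paper's hat-gamma^(i+1)_(j+1)).\<close>
definition tube_wind_jump ::
  "real \<Rightarrow> (complex \<times> complex \<Rightarrow> complex \<times> complex) \<Rightarrow> nat \<Rightarrow> nat \<Rightarrow> int \<Rightarrow> nat \<Rightarrow> (complex \<times> complex) set \<Rightarrow> bool" where
  "tube_wind_jump \<omega> T p q k l U1 \<longleftrightarrow>
     pq_tube T p q U1 \<and>
     (\<exists>(C :: nat \<Rightarrow> (complex \<times> complex) set) (h :: nat \<Rightarrow> nat \<Rightarrow> real \<Rightarrow> real) m n F.
        (\<forall>i<p. C i \<subseteq> (T ^^ i) ` U1 \<and>
           (\<forall>z\<in>S1. \<forall>c\<in>components (tfibre ((T ^^ i) ` U1) z). card (c \<inter> tfibre (C i) z) = 1) \<and>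
           (\<forall>j<q. qcurve_lift q k (C i) (h i j) \<and> 0 \<le> h i j 0 \<and> h i j 0 < 1)) \<and>
        (\<forall>i j i' j'. i < p \<longrightarrow> j < q \<longrightarrow> i' < p \<longrightarrow> j' < q \<longrightarrow>
           i + j * p < i' + j' * p \<longrightarrow> h i j 0 < h i' j' 0) \<and>
        m < p \<and> n < q \<and>
        is_lift T F \<and> (\<forall>\<theta> x. fst (F (\<theta>, x)) = \<theta> + \<omega>) \<and>
        F ` connected_component_set (pi2 -` U1) (0, h 0 0 0)
          = connected_component_set (pi2 -` ((T ^^ m) ` U1)) (0, h m n 0) \<and>
        l = m + n * p)"

end

theory Submission
  imports Defs
begin

text \<open>Lift the tube to the plane. Its components are strips, one around each lift of the
  curves \<gamma>^i; enumerated by their height over \<theta> = 0, the N-th strip follows a curve of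
  slope k/q at height about N/(pq), and translation by 1 in the fibre shifts the enumeration
  by pq. A lift F of T maps strips onto strips preserving their order, commutes with this
  translation and, by definition of the jumping number, maps strip 0 into strip l; hence it
  maps strip N into strip N + l. So F^n(\<theta>, x) stays at bounded distance from the curve of
  index n l over \<theta> + n \<omega>, whose height is k (\<theta> + n \<omega>)/q + n l/(pq) up to a bounded
  error, and the rotation number is k \<omega>/q + l/(pq).

  Conversely, irrationality of \<omega> separates k/q from l/(pq) modulo 1; k/q is in lowest terms
  because a q-curve is not invariant under a smaller shift, 0 \<le> l < pq, and l \<equiv> 1 (mod p)
  when p > 1 because T maps the first piece of the tube to the second.\<close>

section \<open>The circle and the torus\<close>

lemma circ_eq_1_iff: "circ x = 1 \<longleftrightarrow> x \<in> \<int>"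
proof -
  have "circ x = 1 \<longleftrightarrow> (\<exists>n::int. 2 * pi * x = of_int (2 * n) * pi)"
    unfolding circ_def exp_eq_1 by simp
  also have "\<dots> \<longleftrightarrow> x \<in> \<int>" by (auto elim!: Ints_cases)
  finally show ?thesis .
qed

lemma circ_eq_iff: "circ a = circ b \<longleftrightarrow> a - b \<in> \<int>"
proof -
  have "circ b \<noteq> 0" unfolding circ_def by simp
  then have "circ a = circ b \<longleftrightarrow> circ a / circ b = 1" by auto
  also have "circ a / circ b = circ (a - b)"
    unfolding circ_def by (simp add: exp_diff[symmetric] algebra_simps)
  finally show ?thesis by (simp add: circ_eq_1_iff)
qed

lemma circ_add_Ints: "c \<in> \<int> \<Longrightarrow> circ (a + c) = circ a"
  by (simp add: circ_eq_iff)

lemma circ_in_S1 [simp]: "circ t \<in> S1"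
  unfolding circ_def S1_def by (simp add: norm_exp_eq_Re)

lemma S1_circE:
  assumes "z \<in> S1"
  obtains t where "z = circ t" "a \<le> t" "t < a + 1"
proof -
  have "norm z = 1" using assms by (simp add: S1_def)
  then have "z = circ (Arg2pi z / (2 * pi))"
    using Arg2pi_eq[of z] unfolding circ_def by (simp add: algebra_simps)
  moreover define t where "t = Arg2pi z / (2 * pi) - of_int \<lfloor>Arg2pi z / (2 * pi) - a\<rfloor>"
  moreover have "circ t = circ (Arg2pi z / (2 * pi))" unfolding t_def by (simp add: circ_eq_iff)
  ultimately have "z = circ t" by simp
  moreover have "a \<le> t" "t < a + 1" unfolding t_def by linarith+
  ultimately show ?thesis using that by blast
qed

lemma Ints_diff_commute: "(a::real) - b \<in> \<int> \<longleftrightarrow> b - a \<in> \<int>"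
  by (metis Ints_minus minus_diff_eq)

lemma continuous_on_circ [continuous_intros]:
  "continuous_on A f \<Longrightarrow> continuous_on A (\<lambda>x. circ (f x))"
  unfolding circ_def by (intro continuous_intros)

lemma connected_S1: "connected S1"
  unfolding S1_def by (rule connected_sphere) simp

lemma closed_circ_image_Icc: "closed (circ ` {a..b})"
  by (intro compact_imp_closed compact_continuous_image compact_Icc continuous_on_circ continuous_on_id)

lemma circ_image_greaterThanLessThan:
  assumes "a < b" "b \<le> a + 1"
  shows "circ ` {a<..<b} = S1 - circ ` {b..a+1}"
proof (intro equalityI subsetI)
  fix z assume "z \<in> circ ` {a<..<b}"
  then obtain s where s: "z = circ s" "a < s" "s < b" by auto
  have "z \<notin> circ ` {b..a+1}"
  proof
    assume "z \<in> circ ` {b..a+1}"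
    then obtain t where "z = circ t" "b \<le> t" "t \<le> a + 1" by auto
    then have "s - t \<in> \<int>" "\<bar>s - t\<bar> < 1" "s \<noteq> t" using s by (auto simp: circ_eq_iff)
    then show False using Ints_nonzero_abs_less1[of "s - t"] by simp
  qed
  then show "z \<in> S1 - circ ` {b..a+1}" using s by simp
next
  fix z assume z: "z \<in> S1 - circ ` {b..a+1}"
  then obtain t where t: "z = circ t" "a \<le> t" "t < a + 1" using S1_circE[of z a] by blast
  have "circ a = circ (a + 1)" by (simp add: circ_eq_iff)
  then have "t \<noteq> a" using z t assms by auto
  moreover have "\<not> b \<le> t" using z t by auto
  ultimately show "z \<in> circ ` {a<..<b}" using t by auto
qed

lemma circ_notin_circ_image_greaterThanLessThan:
  assumes "b \<le> a + 1"
  shows "circ a \<notin> circ ` {a<..<b}"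
proof
  assume "circ a \<in> circ ` {a<..<b}"
  then obtain s where "circ a = circ s" "a < s" "s < b" by auto
  then have "a - s \<in> \<int>" "\<bar>a - s\<bar> < 1" "a \<noteq> s" using assms by (auto simp: circ_eq_iff)
  then show False using Ints_nonzero_abs_less1[of "a - s"] by simp
qed

lemma continuous_on_pi2 [continuous_intros]: "continuous_on A pi2"
  unfolding pi2_def by (intro continuous_intros continuous_on_fst continuous_on_snd continuous_on_id)

lemma pi2_in_torus [simp]: "pi2 v \<in> torus"
  by (simp add: pi2_def torus_def)

lemma pi2_eq_iff: "pi2 (a, b) = pi2 (c, d) \<longleftrightarrow> a - c \<in> \<int> \<and> b - d \<in> \<int>"
  by (simp add: pi2_def circ_eq_iff)

lemma pi2_add_Ints: "c \<in> \<int> \<Longrightarrow> d \<in> \<int> \<Longrightarrow> pi2 (a + c, b + d) = pi2 (a, b)"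
  by (simp add: pi2_eq_iff)

lemma pi2_in_iff_tfibre: "pi2 (\<theta>, s) \<in> W \<longleftrightarrow> circ s \<in> tfibre W (circ \<theta>)"
  by (simp add: pi2_def tfibre_def)

lemma compact_torus: "compact torus"
  unfolding torus_def S1_def by (intro compact_Times compact_sphere)

lemma torus_eq_Union_fibres: "torus = (\<Union>\<theta>. {circ \<theta>} \<times> S1)"
  unfolding torus_def by (auto elim: S1_circE[where a = 0])

lemma open_vimage_pi2:
  assumes "openin (top_of_set torus) W"
  shows "open (pi2 -` W)"
proof -
  obtain V where V: "open V" "W = torus \<inter> V" using assms by (auto simp: openin_open)
  then have "pi2 -` W = pi2 -` V" using pi2_in_torus by blast
  then show ?thesis using open_vimage[OF V(1) continuous_on_pi2] by simp
qed

lemma connected_subset_open_separation: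
  assumes "connected S" "open A" "open B" "A \<inter> B \<inter> S = {}" "S \<subseteq> A \<union> B" "x \<in> S" "x \<in> A"
  shows "S \<subseteq> A"
  using connectedD[OF assms(1-5)] assms(5-7) by blast

lemma continuous_Ints_valued_constant_on:
  fixes f :: "'a::topological_space \<Rightarrow> real"
  assumes "connected S" "continuous_on S f" "\<And>x. x \<in> S \<Longrightarrow> f x \<in> \<int>"
  shows "f constant_on S"
proof (rule continuous_discrete_range_constant[OF assms(1,2)])
  fix x assume "x \<in> S"
  show "\<exists>e>0. \<forall>y. y \<in> S \<and> f y \<noteq> f x \<longrightarrow> e \<le> norm (f y - f x)"
  proof (intro exI[of _ 1] conjI allI impI)
    fix y assume "y \<in> S \<and> f y \<noteq> f x"
    then show "1 \<le> norm (f y - f x)"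
      using assms(3) \<open>x \<in> S\<close> Ints_nonzero_abs_ge1[of "f y - f x"] by simp
  qed simp
qed

lemma continuous_Ints_valued_const:
  fixes f :: "'a::real_normed_vector \<Rightarrow> real"
  assumes "continuous_on UNIV f" "\<And>x. f x \<in> \<int>"
  shows "f x = f y"
proof -
  obtain c where "\<forall>x. f x = c"
    using continuous_Ints_valued_constant_on[of UNIV f] assms unfolding constant_on_def by auto
  then show ?thesis by simp
qed

lemma add_period_of_int:
  fixes f :: "real \<Rightarrow> real"
  assumes "\<And>x. f (x + a) = f x + b"
  shows "f (x + of_int n * a) = f x + of_int n * b"
proof (induction n rule: int_induct[where k = 0])
  case (step1 i)
  then show ?case using assms[of "x + of_int i * a"] by (simp add: algebra_simps)
next
  case (step2 i)
  then show ?case using assms[of "x + of_int (i - 1) * a"] by (simp add: algebra_simps)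
qed simp

section \<open>Maps of class T_hom\<close>

context
  fixes \<omega> :: real and T :: "complex \<times> complex \<Rightarrow> complex \<times> complex"
  assumes T: "T_hom \<omega> T"
begin

lemma T_hom_Pair: "w \<in> S1 \<Longrightarrow> T (circ \<theta>, w) = (circ (\<theta> + \<omega>), snd (T (circ \<theta>, w)))"
  using T unfolding T_hom_def by (metis prod.collapse)

lemma T_hom_fibre_homeomorphism:
  assumes "z \<in> S1"
  obtains g where "homeomorphism S1 S1 (\<lambda>w. snd (T (z, w))) g"
  using T assms unfolding T_hom_def circle_op_homeo_def by blast

lemma T_hom_image_fibre: "T ` ({circ \<theta>} \<times> S1) = {circ (\<theta> + \<omega>)} \<times> S1"
proof -
  obtain g where "homeomorphism S1 S1 (\<lambda>w. snd (T (circ \<theta>, w))) g"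
    using T_hom_fibre_homeomorphism[OF circ_in_S1] by blast
  then have "(\<lambda>w. snd (T (circ \<theta>, w))) ` S1 = S1" by (simp add: homeomorphism_def)
  moreover have "T ` ({circ \<theta>} \<times> S1) = (\<lambda>w. (circ (\<theta> + \<omega>), snd (T (circ \<theta>, w)))) ` S1"
  proof -
    have "{circ \<theta>} \<times> S1 = (\<lambda>w. (circ \<theta>, w)) ` S1" by auto
    then have "T ` ({circ \<theta>} \<times> S1) = (\<lambda>w. T (circ \<theta>, w)) ` S1" by (simp add: image_image)
    also have "\<dots> = (\<lambda>w. (circ (\<theta> + \<omega>), snd (T (circ \<theta>, w)))) ` S1"
      by (rule image_cong[OF refl T_hom_Pair])
    finally show ?thesis .
  qed
  ultimately show ?thesis by auto
qed

lemma T_hom_image_torus: "T ` torus = torus"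
proof -
  have "T ` torus = (\<Union>\<theta>. {circ (\<theta> + \<omega>)} \<times> S1)"
    unfolding torus_eq_Union_fibres image_UN T_hom_image_fibre ..
  also have "\<dots> = torus"
    unfolding torus_eq_Union_fibres by (auto, metis diff_add_cancel)
  finally show ?thesis .
qed

lemma T_hom_inj_on: "inj_on T torus"
proof
  fix v v' assume "v \<in> torus" "v' \<in> torus" and eq: "T v = T v'"
  then obtain \<theta> w \<theta>' w' where v: "v = (circ \<theta>, w)" "v' = (circ \<theta>', w')" "w \<in> S1" "w' \<in> S1"
    unfolding torus_eq_Union_fibres by blast
  have "circ (\<theta> + \<omega>) = circ (\<theta>' + \<omega>)" using eq v T_hom_Pair by (metis fst_conv)
  then have \<theta>: "circ \<theta> = circ \<theta>'" by (simp add: circ_eq_iff)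
  obtain g where "homeomorphism S1 S1 (\<lambda>w. snd (T (circ \<theta>, w))) g"
    using T_hom_fibre_homeomorphism[OF circ_in_S1] by blast
  then have "inj_on (\<lambda>w. snd (T (circ \<theta>, w))) S1" by (meson homeomorphism_apply1 inj_on_inverseI)
  moreover have "snd (T (circ \<theta>, w)) = snd (T (circ \<theta>, w'))" using eq v \<theta> by simp
  ultimately show "v = v'" using v \<theta> by (auto dest: inj_onD)
qed

lemma T_hom_homeomorphism: obtains g where "homeomorphism torus torus T g"
  using homeomorphism_compact[OF compact_torus _ T_hom_image_torus T_hom_inj_on] T
  unfolding T_hom_def by blast

lemma T_hom_funpow_openin:
  assumes "openin (top_of_set torus) W"
  shows "openin (top_of_set torus) ((T ^^ i) ` W)"
proof (induction i)
  case (Suc i)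
  obtain g where "homeomorphism torus torus T g" by (rule T_hom_homeomorphism)
  then have "openin (top_of_set torus) (T ` (T ^^ i) ` W)"
    using homeomorphism_imp_open_map Suc by blast
  then show ?case by (simp add: image_comp)
qed (use assms in simp)

lemma T_hom_funpow_subset_torus: "W \<subseteq> torus \<Longrightarrow> (T ^^ i) ` W \<subseteq> torus"
  by (induction i) (use T_hom_image_torus in \<open>auto simp: image_comp[symmetric]\<close>)

lemma T_hom_funpow_full_fibre:
  "{circ \<theta>} \<times> S1 \<subseteq> W \<Longrightarrow> {circ (\<theta> + real i * \<omega>)} \<times> S1 \<subseteq> (T ^^ i) ` W"
proof (induction i)
  case (Suc i)
  then have "T ` ({circ (\<theta> + real i * \<omega>)} \<times> S1) \<subseteq> T ` (T ^^ i) ` W" by blast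
  then show ?case by (simp add: T_hom_image_fibre image_comp algebra_simps)
qed simp

end

section \<open>Lifts\<close>

lemma is_lift_pi2: "is_lift T F \<Longrightarrow> pi2 (F v) = T (pi2 v)"
  unfolding is_lift_def by blast

lemma is_lift_continuous: "is_lift T F \<Longrightarrow> continuous_on UNIV F"
  unfolding is_lift_def by blast

lemma strict_mono_circle_lift_add_1:
  fixes h :: "real \<Rightarrow> real"
  assumes f: "inj_on f S1" and h: "continuous_on UNIV h" "strict_mono h"
    and fh: "\<And>x. f (circ x) = circ (h x)"
  shows "h (x + 1) = h x + 1"
proof -
  have "circ (h (x + 1)) = circ (h x)" for x
    using fh[of "x + 1"] fh[of x] circ_add_Ints[of 1 x] by simp
  then have Ints: "h (x + 1) - h x \<in> \<int>" for x by (simp add: circ_eq_iff)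
  have "continuous_on UNIV (\<lambda>x. h (x + 1) - h x)"
    by (intro continuous_intros continuous_on_compose2[OF h(1)]) auto
  then have "h (x + 1) - h x = h (0 + 1) - h 0" for x using Ints by (rule continuous_Ints_valued_const)
  then have const: "h (x + 1) - h x = h 1 - h 0" for x by simp
  have "h 1 - h 0 = 1"
  proof (rule ccontr)
    assume ne1: "h 1 - h 0 \<noteq> 1"
    obtain n :: int where n: "h 1 - h 0 = of_int n" using Ints[of 0] by (auto elim: Ints_cases)
    moreover have "h 0 < h 1" using h(2) by (simp add: strict_mono_def)
    ultimately have "h 0 + 1 < h 1" using ne1 by simp
    then obtain y where y: "0 \<le> y" "y \<le> 1" "h y = h 0 + 1"
      using IVT'[of h 0 "h 0 + 1" 1] continuous_on_subset[OF h(1)] by force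
    then have "0 < y \<and> y < 1" using \<open>h 0 + 1 < h 1\<close> by (cases "y = 0"; cases "y = 1") auto
    moreover have "f (circ y) = f (circ 0)" using fh y circ_add_Ints[of 1 "h 0"] by simp
    then have "circ y = circ 0" using f circ_in_S1 by (meson inj_onD)
    ultimately show False using Ints_nonzero_abs_less1[of y] by (auto simp: circ_eq_iff)
  qed
  then show ?thesis using const[of x] by simp
qed

context
  fixes \<omega> :: real and T :: "complex \<times> complex \<Rightarrow> complex \<times> complex"
    and F :: "real \<times> real \<Rightarrow> real \<times> real"
  assumes T: "T_hom \<omega> T" and F: "is_lift T F"
begin

lemma lift_fibre_eq_circle_lift:
  obtains h c where "strict_mono h" "\<And>x. h (x + 1) = h x + 1" "\<And>x. snd (F (\<theta>, x)) = h x + c"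
proof -
  define f where "f = (\<lambda>w. snd (T (circ \<theta>, w)))"
  obtain g h where g: "homeomorphism S1 S1 f g" and h: "continuous_on UNIV h" "strict_mono h"
    and fh: "\<And>x. f (circ x) = circ (h x)"
    using T circ_in_S1 unfolding T_hom_def circle_op_homeo_def f_def by blast
  have "inj_on f S1" using g by (meson homeomorphism_apply1 inj_on_inverseI)
  then have h1: "h (x + 1) = h x + 1" for x by (rule strict_mono_circle_lift_add_1[OF _ h fh])
  define \<psi> where "\<psi> = (\<lambda>x. snd (F (\<theta>, x)))"
  have "continuous_on UNIV (\<lambda>x::real. (\<theta>, x))" by (intro continuous_intros)
  then have "continuous_on UNIV (\<lambda>x. F (\<theta>, x))"
    using continuous_on_compose2[OF is_lift_continuous[OF F] _ subset_UNIV] by blast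
  then have "continuous_on UNIV (\<lambda>x. \<psi> x - h x)"
    unfolding \<psi>_def using h(1) by (intro continuous_intros)
  moreover have "\<psi> x - h x \<in> \<int>" for x
  proof -
    have "circ (\<psi> x) = f (circ x)"
      using is_lift_pi2[OF F, of "(\<theta>, x)"] unfolding \<psi>_def f_def by (simp add: pi2_def prod_eq_iff)
    then show ?thesis using fh by (simp add: circ_eq_iff)
  qed
  ultimately have "\<psi> x - h x = \<psi> 0 - h 0" for x by (rule continuous_Ints_valued_const)
  then show thesis using that[OF h(2) h1, of "\<psi> 0 - h 0"] unfolding \<psi>_def by (simp add: algebra_simps)
qed

lemma lift_fibre_strict_mono: "strict_mono (\<lambda>x. snd (F (\<theta>, x)))"
proof -
  obtain h c where "strict_mono h" "\<And>x. h (x + 1) = h x + 1" "\<And>x. snd (F (\<theta>, x)) = h x + c"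
    using lift_fibre_eq_circle_lift[of \<theta>] by blast
  then show ?thesis by (simp add: strict_mono_def)
qed

lemma lift_fibre_le_iff: "snd (F (\<theta>, x)) \<le> snd (F (\<theta>, y)) \<longleftrightarrow> x \<le> y"
  by (rule strict_mono_less_eq[OF lift_fibre_strict_mono])

lemma lift_fibre_less_iff: "snd (F (\<theta>, x)) < snd (F (\<theta>, y)) \<longleftrightarrow> x < y"
  by (rule strict_mono_less[OF lift_fibre_strict_mono])

lemma lift_fibre_add_Ints: "c \<in> \<int> \<Longrightarrow> snd (F (\<theta>, x + c)) = snd (F (\<theta>, x)) + c"
proof -
  obtain h c0 where "strict_mono h" "\<And>x. h (x + 1) = h x + 1" "\<And>x. snd (F (\<theta>, x)) = h x + c0"
    using lift_fibre_eq_circle_lift[of \<theta>] by blast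
  then have "snd (F (\<theta>, x + of_int n * 1)) = snd (F (\<theta>, x)) + of_int n * 1" for n
    using add_period_of_int[of "\<lambda>x. snd (F (\<theta>, x))" 1 1] by simp
  then show "c \<in> \<int> \<Longrightarrow> snd (F (\<theta>, x + c)) = snd (F (\<theta>, x)) + c" by (auto elim: Ints_cases)
qed

end

lemma is_lift_eq_add_Ints:
  assumes "is_lift T F" "is_lift T F'"
  obtains d1 d2 where "d1 \<in> \<int>" "d2 \<in> \<int>" "\<And>v. F' v = F v + (d1, d2)"
proof -
  define D where "D = (\<lambda>v. F' v - F v)"
  have "pi2 (F' v) = pi2 (F v)" for v using assms by (simp add: is_lift_pi2)
  then have Ints: "fst (D v) \<in> \<int>" "snd (D v) \<in> \<int>" for v
    unfolding D_def using pi2_eq_iff by (metis fst_diff snd_diff prod.collapse)+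
  have "continuous_on UNIV D"
    using assms is_lift_continuous unfolding D_def by (intro continuous_intros)
  then have "continuous_on UNIV (\<lambda>v. fst (D v))" "continuous_on UNIV (\<lambda>v. snd (D v))"
    by (auto intro: continuous_intros)
  then have "fst (D v) = fst (D 0)" "snd (D v) = snd (D 0)" for v
    using continuous_Ints_valued_const Ints by blast+
  then have "F' v = F v + (fst (D 0), snd (D 0))" for v
    by (metis D_def add_diff_cancel_left' diff_add_cancel prod.collapse)
  then show thesis using that Ints by blast
qed

lemma is_lift_base_period:
  assumes "is_lift T F"
  obtains e where "e \<in> \<int>" "\<And>\<theta> x. snd (F (\<theta> + 1, x)) = snd (F (\<theta>, x)) + e"
proof -
  define f where "f = (\<lambda>v::real \<times> real. snd (F (fst v + 1, snd v)) - snd (F v))"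
  have "pi2 (F (\<theta> + 1, x)) = pi2 (F (\<theta>, x))" for \<theta> x
    using is_lift_pi2[OF assms] pi2_add_Ints[of 1 0 \<theta> x] by simp
  then have Ints: "f v \<in> \<int>" for v
    unfolding f_def by (metis pi2_eq_iff prod.collapse)
  have "continuous_on UNIV F" using assms by (rule is_lift_continuous)
  then have "continuous_on UNIV f"
    unfolding f_def by (auto intro!: continuous_intros intro: continuous_on_compose2)
  then have "f v = f 0" for v using Ints by (rule continuous_Ints_valued_const)
  then show thesis using that[of "f 0"] Ints unfolding f_def by (metis add_diff_cancel_left' diff_add_cancel fst_conv snd_conv)
qed

lemma linear_quadratic_over_n_limit:
  fixes a b L :: real
  assumes "(\<lambda>n. (real n * a + b * (real n * (real n - 1) / 2)) / real n) \<longlonglongrightarrow> L"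
  shows "b = 0 \<and> L = a"
proof -
  define u where "u = (\<lambda>n. (real n * a + b * (real n * (real n - 1) / 2)) / real n)"
  have u: "u n = a + b * (real n - 1) / 2" if "n \<ge> 1" for n
    unfolding u_def using that by (simp add: field_simps)
  have "(\<lambda>n. u (Suc n) - u n) \<longlonglongrightarrow> L - L"
    using assms unfolding u_def by (intro tendsto_diff LIMSEQ_Suc)
  moreover have "u (Suc n) - u n = b / 2" if "n \<ge> 1" for n
    using u[of n] u[of "Suc n"] that by (simp add: field_simps)
  then have "eventually (\<lambda>n. u (Suc n) - u n = b / 2) sequentially"
    by (intro eventually_sequentiallyI[of 1])
  ultimately have "(\<lambda>n. b / 2) \<longlonglongrightarrow> 0" by (simp add: tendsto_cong)
  then have "b = 0" by (simp add: LIMSEQ_const_iff)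
  moreover have "eventually (\<lambda>n. u n = a) sequentially"
    using u \<open>b = 0\<close> by (intro eventually_sequentiallyI[of 1]) simp
  then have "u \<longlonglongrightarrow> a" by (simp add: tendsto_eventually)
  ultimately show ?thesis using assms LIMSEQ_unique unfolding u_def by blast
qed

locale fibred_lift =
  fixes \<omega> :: real and T :: "complex \<times> complex \<Rightarrow> complex \<times> complex"
    and F :: "real \<times> real \<Rightarrow> real \<times> real"
  assumes T_hom: "T_hom \<omega> T" and lift: "is_lift T F"
    and fst_lift: "\<And>\<theta> x. fst (F (\<theta>, x)) = \<theta> + \<omega>"
begin

lemma fst_funpow: "fst ((F ^^ n) v) = fst v + real n * \<omega>"
proof (induction n)
  case (Suc n)
  have "fst (F w) = fst w + \<omega>" for w using fst_lift by (cases w) simp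
  then show ?case using Suc by (simp add: algebra_simps)
qed simp

lemma lift_Pair: "F (\<theta>, x) = (\<theta> + \<omega>, snd (F (\<theta>, x)))"
  using fst_lift by (metis prod.collapse)

lemma funpow_Suc_Pair: "(F ^^ Suc n) (\<theta>, x) = F (\<theta> + real n * \<omega>, snd ((F ^^ n) (\<theta>, x)))"
  using prod.collapse[of "(F ^^ n) (\<theta>, x)"] fst_funpow[of n "(\<theta>, x)"] by simp

lemma funpow_snd_mono: "x \<le> y \<Longrightarrow> snd ((F ^^ n) (\<theta>, x)) \<le> snd ((F ^^ n) (\<theta>, y))"
proof (induction n)
  case (Suc n)
  then show ?case
    by (simp only: funpow_Suc_Pair lift_fibre_le_iff[OF T_hom lift])
qed simp

lemma funpow_snd_add_Ints: "c \<in> \<int> \<Longrightarrow> snd ((F ^^ n) (\<theta>, x + c)) = snd ((F ^^ n) (\<theta>, x)) + c"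
proof (induction n)
  case (Suc n)
  then show ?case by (simp only: funpow_Suc_Pair lift_fibre_add_Ints[OF T_hom lift])
qed simp

lemma funpow_lift_add_Ints:
  assumes d: "d1 = of_int j" "d2 \<in> \<int>" "\<And>v. F' v = F v + (d1, d2)"
    and e: "e \<in> \<int>" "\<And>\<theta> x. snd (F (\<theta> + 1, x)) = snd (F (\<theta>, x)) + e"
  defines "D n \<equiv> real n * d2 + e * d1 * (real n * (real n - 1) / 2)"
  shows "(F' ^^ n) (0, 0) = (real n * (\<omega> + d1), snd ((F ^^ n) (0, 0)) + D n)"
proof -
  have "(F' ^^ n) (0, 0) = (real n * (\<omega> + d1), snd ((F ^^ n) (0, 0)) + D n) \<and> D n \<in> \<int>"
  proof (induction n)
    case (Suc n)
    define y where "y = snd ((F ^^ n) (0, 0))"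
    have IH: "(F' ^^ n) (0, 0) = (real n * (\<omega> + d1), y + D n)" "D n \<in> \<int>"
      using Suc unfolding y_def by auto
    have "snd (F (real n * (\<omega> + d1), y + D n)) = snd (F (real n * \<omega> + of_int (int n * j) * 1, y + D n))"
      using d(1) by (simp add: algebra_simps)
    also have "\<dots> = snd (F (real n * \<omega>, y + D n)) + of_int (int n * j) * e"
      using add_period_of_int[of "\<lambda>\<theta>. snd (F (\<theta>, y + D n))" 1 e] e(2) by blast
    also have "snd (F (real n * \<omega>, y + D n)) = snd ((F ^^ Suc n) (0, 0)) + D n"
      using lift_fibre_add_Ints[OF T_hom lift IH(2)] funpow_Suc_Pair[of n 0 0] unfolding y_def by simp
    finally have "snd (F (real n * (\<omega> + d1), y + D n)) + d2 = snd ((F ^^ Suc n) (0, 0)) + D (Suc n)"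
      using d(1) unfolding D_def by (simp add: field_simps)
    moreover have "D (Suc n) \<in> \<int>"
    proof -
      have "D (Suc n) = D n + of_int (int n * j) * e + d2" using d(1) unfolding D_def by (simp add: field_simps)
      then show ?thesis using IH(2) e(1) d(2) by (simp add: Ints_add Ints_mult)
    qed
    moreover have "(F' ^^ Suc n) (0, 0) = F (real n * (\<omega> + d1), y + D n) + (d1, d2)"
      by (simp only: funpow.simps(2) o_apply IH(1) d(3))
    moreover have "fst (F (real n * (\<omega> + d1), y + D n)) + d1 = real (Suc n) * (\<omega> + d1)"
      using fst_lift by (simp add: algebra_simps)
    ultimately show ?case by (simp add: prod_eq_iff)
  qed (simp add: D_def)
  then show ?thesis ..
qed

text \<open>Any other lift of T is F + (d1, d2) with d1, d2 integers. Its iterates carry the drift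
  term of funpow_lift_add_Ints, quadratic in n unless e d1 = 0; existence of both rotation
  limits forces e d1 = 0, so the limits differ by the integer d2.\<close>

lemma rot_num_eqI:
  assumes lim: "\<And>\<theta> x. (\<lambda>n. (snd ((F ^^ n) (\<theta>, x)) - x) / real n) \<longlonglongrightarrow> r"
  shows "rot_num T = frac r"
  unfolding rot_num_def
proof (rule the_equality)
  show "\<exists>F. is_lift T F \<and> (\<exists>r'. frac r' = frac r \<and>
          (\<forall>\<theta> x. (\<lambda>n. (snd ((F ^^ n) (\<theta>, x)) - x) / real n) \<longlonglongrightarrow> r'))"
    using lift lim by blast
next
  fix \<rho> assume "\<exists>F'. is_lift T F' \<and> (\<exists>r'. frac r' = \<rho> \<and>
          (\<forall>\<theta> x. (\<lambda>n. (snd ((F' ^^ n) (\<theta>, x)) - x) / real n) \<longlonglongrightarrow> r'))"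
  then obtain F' r' where F': "is_lift T F'" "frac r' = \<rho>"
    and lim': "(\<lambda>n. (snd ((F' ^^ n) (0, 0)) - 0) / real n) \<longlonglongrightarrow> r'"
    by blast
  obtain d1 d2 where d: "d1 \<in> \<int>" "d2 \<in> \<int>" "\<And>v. F' v = F v + (d1, d2)"
    using is_lift_eq_add_Ints[OF lift F'(1)] by blast
  obtain j where j: "d1 = of_int j" using d(1) by (auto elim: Ints_cases)
  obtain e where e: "e \<in> \<int>" "\<And>\<theta> x. snd (F (\<theta> + 1, x)) = snd (F (\<theta>, x)) + e"
    using is_lift_base_period[OF lift] by blast
  have "(\<lambda>n. (snd ((F' ^^ n) (0, 0)) - 0) / real n - (snd ((F ^^ n) (0, 0)) - 0) / real n)
          \<longlonglongrightarrow> r' - r"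
    using lim' lim by (rule tendsto_diff)
  then have "(\<lambda>n. (real n * d2 + e * d1 * (real n * (real n - 1) / 2)) / real n) \<longlonglongrightarrow> r' - r"
    using funpow_lift_add_Ints[OF j d(2,3) e] by (simp add: diff_divide_distrib[symmetric])
  then have "r' - r = d2" using linear_quadratic_over_n_limit by blast
  then show "\<rho> = frac r" using F'(2) d(2) by (metis frac_add_int_right diff_add_cancel add.commute)
qed

end

section \<open>Lifts of q-curves\<close>

lemma continuous_avoiding_Ints_floor_eq:
  fixes f :: "real \<Rightarrow> real"
  assumes f: "continuous_on UNIV f" "\<And>t. f t \<notin> \<int>"
  shows "\<lfloor>f t\<rfloor> = \<lfloor>f s\<rfloor>"
proof -
  have "\<lfloor>f t\<rfloor> \<le> \<lfloor>f s\<rfloor>" for s t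
  proof (rule ccontr)
    assume "\<not> \<lfloor>f t\<rfloor> \<le> \<lfloor>f s\<rfloor>"
    then have "f s < of_int \<lfloor>f t\<rfloor>" by (meson floor_less_iff not_le)
    then have "of_int \<lfloor>f t\<rfloor> \<in> {f s..f t}" by simp
    moreover have "{f s..f t} \<subseteq> range f"
      by (intro connected_contains_Icc connected_continuous_image f(1) connected_UNIV) auto
    ultimately have "of_int \<lfloor>f t\<rfloor> \<in> range f" by blast
    then show False using f(2) by (metis Ints_of_int imageE)
  qed
  then show ?thesis by (meson antisym)
qed

lemma continuous_periodic_bounded:
  fixes \<psi> :: "real \<Rightarrow> real"
  assumes "continuous_on UNIV \<psi>" "0 < P" "\<And>t. \<psi> (t + P) = \<psi> t"
  obtains M where "\<And>t. \<bar>\<psi> t\<bar> \<le> M"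
proof -
  have "compact (\<psi> ` {0..P})"
    by (rule compact_continuous_image[OF continuous_on_subset[OF assms(1)] compact_Icc]) simp
  then obtain M where M: "\<And>t. t \<in> {0..P} \<Longrightarrow> \<bar>\<psi> t\<bar> \<le> M"
    unfolding bounded_real[symmetric] by (meson compact_imp_bounded bounded_real image_eqI)
  have "\<bar>\<psi> t\<bar> \<le> M" for t
  proof -
    define t' where "t' = t - of_int \<lfloor>t / P\<rfloor> * P"
    have "of_int \<lfloor>t / P\<rfloor> \<le> t / P" "t / P < of_int \<lfloor>t / P\<rfloor> + 1" by linarith+
    then have "of_int \<lfloor>t / P\<rfloor> * P \<le> t" "t < (of_int \<lfloor>t / P\<rfloor> + 1) * P"
      using assms(2) by (simp_all only: pos_le_divide_eq pos_divide_less_eq)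
    then have "t' \<in> {0..P}" unfolding t'_def by (simp add: algebra_simps)
    moreover have "\<psi> t = \<psi> t'"
      using add_period_of_int[of \<psi> P 0, OF _, of t' "\<lfloor>t / P\<rfloor>"] assms(3) unfolding t'_def by simp
    ultimately show ?thesis using M by simp
  qed
  then show thesis by (rule that)
qed

context
  fixes q :: nat and k :: int and C :: "(complex \<times> complex) set" and g :: "real \<Rightarrow> real"
  assumes g: "qcurve_lift q k C g"
begin

lemma qcurve_lift_continuous: "continuous_on UNIV g"
  using g unfolding qcurve_lift_def by blast

lemma qcurve_lift_add_q: "g (t + real q) = g t + of_int k"
  using g unfolding qcurve_lift_def by (metis add_diff_cancel_left' diff_add_cancel add.commute)

lemma qcurve_lift_not_Ints: "j \<in> {1..<q} \<Longrightarrow> g (t + real j) - g t \<notin> \<int>"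
  using g unfolding qcurve_lift_def by blast

lemma qcurve_lift_image: "C = (\<lambda>t. pi2 (t, g t)) ` UNIV"
  using g unfolding qcurve_lift_def by blast

lemma qcurve_lift_add_mult_q: "g (t + of_int b * real q) = g t + of_int b * of_int k"
  using add_period_of_int[of g "real q" "of_int k"] qcurve_lift_add_q by blast

lemma qcurve_lift_add_Ints: "c \<in> \<int> \<Longrightarrow> qcurve_lift q k C (\<lambda>t. g t + c)"
  unfolding qcurve_lift_def
  using qcurve_lift_continuous qcurve_lift_add_q qcurve_lift_not_Ints
  by (auto intro!: continuous_intros simp: qcurve_lift_image pi2_add_Ints[of 0 _ _ "g _", simplified])

lemma qcurve_lift_shift: "a \<in> \<int> \<Longrightarrow> qcurve_lift q k C (\<lambda>t. g (t + a))"
proof -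
  assume a: "a \<in> \<int>"
  have "(\<lambda>t. pi2 (t, g (t + a))) = (\<lambda>t. pi2 (t, g t)) \<circ> (\<lambda>t. t + a)"
    using pi2_add_Ints[OF a Ints_0] by (simp add: fun_eq_iff)
  moreover have "surj (\<lambda>t::real. t + a)" by (rule surjI[of _ "\<lambda>t. t - a"]) simp
  ultimately have "(\<lambda>t. pi2 (t, g (t + a))) ` UNIV = (\<lambda>t. pi2 (t, g t)) ` UNIV"
    by (simp only: image_comp[symmetric])
  then have image: "C = (\<lambda>t. pi2 (t, g (t + a))) ` UNIV" by (simp only: qcurve_lift_image)
  have cont: "continuous_on UNIV (\<lambda>t. g (t + a))"
    by (intro continuous_on_compose2[OF qcurve_lift_continuous] continuous_intros) auto
  show ?thesis unfolding qcurve_lift_def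
  proof (intro conjI cont image allI ballI)
    show "g (t + real q + a) - g (t + a) = of_int k" for t
      using qcurve_lift_add_q[of "t + a"] by (simp add: algebra_simps)
    show "g (t + real j + a) - g (t + a) \<notin> \<int>" if "j \<in> {1..<q}" for j t
      using qcurve_lift_not_Ints[OF that, of "t + a"] by (simp add: algebra_simps)
  qed
qed

lemma qcurve_lift_shifts_not_Ints:
  assumes "a < q" "b < q" "a \<noteq> b"
  shows "g (t + real a) - g (t + real b) \<notin> \<int>"
proof (cases "a < b")
  case True
  then have "g ((t + real a) + real (b - a)) - g (t + real a) \<notin> \<int>"
    using assms by (intro qcurve_lift_not_Ints) auto
  then show ?thesis using True by (simp add: Ints_diff_commute)
next
  case False
  then have "g ((t + real b) + real (a - b)) - g (t + real b) \<notin> \<int>"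
    using assms by (intro qcurve_lift_not_Ints) auto
  then show ?thesis using False by simp
qed

lemma qcurve_lift_bounded_deviation:
  assumes "0 < q"
  obtains M where "\<And>t. \<bar>g t - of_int k * t / real q\<bar> \<le> M"
proof (rule continuous_periodic_bounded)
  show "continuous_on UNIV (\<lambda>t. g t - of_int k * t / real q)"
    using qcurve_lift_continuous assms by (intro continuous_intros) auto
  show "g (t + real q) - of_int k * (t + real q) / real q = g t - of_int k * t / real q" for t
    using qcurve_lift_add_q assms by (simp add: field_simps)
qed (use assms that in auto)

lemma qcurve_lift_coprime:
  assumes q: "0 < q"
  shows "coprime k (int q)"
proof (rule ccontr)
  assume "\<not> coprime k (int q)"
  define d where "d = nat (gcd k (int q))"
  have "gcd k (int q) > 0" using q by simp
  moreover have "gcd k (int q) \<noteq> 1" using \<open>\<not> coprime k (int q)\<close> by (simp add: coprime_iff_gcd_eq_1)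
  ultimately have "d > 1" unfolding d_def by linarith
  have "int d = gcd k (int q)" unfolding d_def by simp
  then have "int d dvd int q" "int d dvd k" by simp_all
  then obtain j k' where qj: "q = d * j" and kk: "k = int d * k'"
    by (metis dvdE int_dvd_int_iff)
  have j: "j \<in> {1..<q}" using q qj \<open>d > 1\<close> by auto
  define f where "f = (\<lambda>t. g (t + real j) - g t)"
  have "continuous_on UNIV f"
    unfolding f_def by (intro continuous_intros continuous_on_compose2[OF qcurve_lift_continuous]) auto
  moreover have f_not_Ints: "f t \<notin> \<int>" for t unfolding f_def by (rule qcurve_lift_not_Ints[OF j])
  ultimately have floor_f: "\<lfloor>f t\<rfloor> = \<lfloor>f 0\<rfloor>" for t by (rule continuous_avoiding_Ints_floor_eq)
  define N where "N = \<lfloor>f 0\<rfloor>"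
  have fN: "of_int N < f t \<and> f t < of_int N + 1" for t
  proof -
    have "f t \<noteq> of_int \<lfloor>f t\<rfloor>" using f_not_Ints[of t] by (metis Ints_of_int)
    then show ?thesis using floor_f[of t] floor_correct[of "f t"] unfolding N_def by linarith
  qed
  have "(\<Sum>r<d. f (real r * real j)) = (\<Sum>r<d. g (real (Suc r) * real j) - g (real r * real j))"
    unfolding f_def by (simp add: algebra_simps)
  also have "\<dots> = g (real d * real j) - g (real 0 * real j)"
    by (rule sum_lessThan_telescope)
  also have "\<dots> = g (0 + real q) - g 0" using qj by simp
  finally have sum_f: "(\<Sum>r<d. f (real r * real j)) = of_int k" by (simp only: qcurve_lift_add_q)
  have "(\<Sum>r<d. (of_int N :: real)) < (\<Sum>r<d. f (real r * real j))"
    "(\<Sum>r<d. f (real r * real j)) < (\<Sum>r<d. (of_int N + 1 :: real))"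
    using \<open>d > 1\<close> fN by (intro sum_strict_mono; auto)+
  then have "real d * of_int N < real d * of_int k'" "real d * of_int k' < real d * (of_int N + 1)"
    using sum_f kk by simp_all
  then have "N < k'" "k' < N + 1" using \<open>d > 1\<close> by (simp_all add: mult_less_cancel_left)
  then show False by simp
qed

end

lemma qcurve_lift_shift_Ints:
  assumes g: "qcurve_lift q k C g" and g': "qcurve_lift q k' C g'" and q: "0 < q"
  obtains a where "a < q" "g' t - g (t + real a) \<in> \<int>"
proof -
  have "pi2 (t, g' t) \<in> C" using qcurve_lift_image[OF g'] by blast
  then obtain s where "pi2 (t, g' t) = pi2 (s, g s)" using qcurve_lift_image[OF g] by blast
  then have st: "s - t \<in> \<int>" "g' t - g s \<in> \<int>" by (auto simp: pi2_eq_iff Ints_diff_commute)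
  then obtain z :: int where z: "s = t + of_int z" by (metis Ints_cases add_diff_cancel_left' diff_add_cancel)
  define a where "a = nat (z mod int q)"
  have a: "a < q" "of_int z = real a + of_int (z div int q) * real q"
    using q unfolding a_def by (simp_all add: nat_less_iff) (metis mod_div_mult_eq of_int_add of_int_mult of_int_of_nat_eq add.commute)
  have "s = (t + real a) + of_int (z div int q) * real q" using z a(2) by simp
  then have "g s = g (t + real a) + of_int (z div int q) * of_int k"
    using qcurve_lift_add_mult_q[OF g] by simp
  then have "g' t - g (t + real a) = (g' t - g s) + of_int (z div int q * k)" by simp
  then have "g' t - g (t + real a) \<in> \<int>" using st(2) by (metis Ints_add Ints_of_int)
  then show thesis using a(1) that by blast
qed

lemma qcurve_lift_unique:
  assumes g: "qcurve_lift q k C g" and g': "qcurve_lift q k' C g'" and q: "0 < q"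
  obtains a c where "a < q" "c \<in> \<int>" "\<And>t. g' t = g (t + real a) + c"
proof -
  define Z where "Z = (\<lambda>b. {t. g' t - g (t + real b) \<in> \<int>})"
  have cont: "continuous_on UNIV (\<lambda>t. g' t - g (t + real b))" for b
    using qcurve_lift_continuous[OF g'] 
    by (intro continuous_intros continuous_on_compose2[OF qcurve_lift_continuous[OF g]]) auto
  have closed_Z: "closed (Z b)" for b
    using continuous_closed_vimage[OF closed_Ints, of "\<lambda>t. g' t - g (t + real b)"] cont[of b]
    unfolding Z_def by (simp add: continuous_on_eq_continuous_within vimage_def)
  obtain a where a: "a < q" "0 \<in> Z a" using qcurve_lift_shift_Ints[OF g g' q, of 0] unfolding Z_def by blast
  have Z_disjoint: "b = b'" if "t \<in> Z b" "t \<in> Z b'" "b < q" "b' < q" for t b b'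
  proof (rule ccontr)
    assume "b \<noteq> b'"
    have "(g' t - g (t + real b')) - (g' t - g (t + real b)) \<in> \<int>"
      by (rule Ints_diff) (use that in \<open>auto simp: Z_def\<close>)
    then show False using qcurve_lift_shifts_not_Ints[OF g that(3,4) \<open>b \<noteq> b'\<close>] by simp
  qed
  have "\<exists>b<q. t \<in> Z b" for t using qcurve_lift_shift_Ints[OF g g' q, of t] unfolding Z_def by blast
  then have "- Z a = (\<Union>b\<in>{b. b < q \<and> b \<noteq> a}. Z b)" using Z_disjoint a(1) by blast
  moreover have "closed (\<Union>b\<in>{b. b < q \<and> b \<noteq> a}. Z b)" using closed_Z by (intro closed_UN) auto
  ultimately have "open (Z a)" by (simp add: open_closed)
  then have "Z a = UNIV"
    using connected_subset_open_separation[OF connected_UNIV _ open_Compl[OF closed_Z[of a]] _ _ _ a(2)]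
    by blast
  then have "g' t - g (t + real a) \<in> \<int>" for t unfolding Z_def by blast
  then have "g' t - g (t + real a) = g' 0 - g (0 + real a)" for t
    by (rule continuous_Ints_valued_const[OF cont])
  then have "g' t = g (t + real a) + (g' 0 - g (0 + real a))" for t
    by (metis add.commute diff_eq_eq)
  moreover have "g' 0 - g (0 + real a) \<in> \<int>" using a(2) unfolding Z_def by simp
  ultimately show thesis using that[OF a(1)] by blast
qed

lemma qcurve_lift_eqI:
  assumes g: "qcurve_lift q k C g" and g': "qcurve_lift q k' C g'" and q: "0 < q" and "g t0 = g' t0"
  shows "g' = g"
proof -
  obtain a c where a: "a < q" "c \<in> \<int>" "\<And>t. g' t = g (t + real a) + c"
    using qcurve_lift_unique[OF g g' q] by blast
  have "g (t0 + real a) - g (t0 + real 0) \<in> \<int>" using a(2) a(3)[of t0] assms(4) by simp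
  then have "a = 0" using qcurve_lift_shifts_not_Ints[OF g a(1) q] by blast
  then show ?thesis using a(3) assms(4) by (auto simp: fun_eq_iff)
qed

section \<open>Arcs of the circle\<close>

lemma q_arcs_ne_S1:
  assumes "q_arcs q A" "0 < q"
  shows "A \<noteq> S1"
proof
  assume "A = S1"
  obtain a b where ab: "\<And>i. i < q \<Longrightarrow> a i < b i \<and> b i \<le> a i + 1"
    and disj: "disjoint_family_on (\<lambda>i. circ ` {a i<..<b i}) {..<q}"
    and A: "A = (\<Union>i<q. circ ` {a i<..<b i})"
    using assms(1) unfolding q_arcs_def by blast
  define arc where "arc i = circ ` {a i<..<b i}" for i
  have arc: "arc i = S1 \<inter> - circ ` {b i..a i + 1}" if "i < q" for i
    using circ_image_greaterThanLessThan[of "a i" "b i"] ab[OF that] unfolding arc_def by blast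
  then have "openin (top_of_set S1) (arc i)" if "i < q" for i
    using that closed_circ_image_Icc by (simp add: openin_open_Int open_Compl)
  then have "openin (top_of_set S1) (arc 0)" "openin (top_of_set S1) (\<Union>i\<in>{1..<q}. arc i)"
    using assms(2) by auto
  moreover have "S1 \<subseteq> arc 0 \<union> (\<Union>i\<in>{1..<q}. arc i)"
  proof
    fix z assume "z \<in> S1"
    then obtain i where "i < q" "z \<in> arc i" using \<open>A = S1\<close> A unfolding arc_def by blast
    then show "z \<in> arc 0 \<union> (\<Union>i\<in>{1..<q}. arc i)" by (cases "i = 0") auto
  qed
  moreover have "arc 0 \<inter> (\<Union>i\<in>{1..<q}. arc i) = {}"
  proof -
    have "arc 0 \<inter> arc i = {}" if "i \<in> {1..<q}" for i
      using disj assms(2) that unfolding arc_def disjoint_family_on_def by simp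
    then show ?thesis by blast
  qed
  moreover have "arc 0 \<noteq> {}" using ab[OF assms(2)] unfolding arc_def by auto
  ultimately have "(\<Union>i\<in>{1..<q}. arc i) = {}" using connected_S1 unfolding connected_openin by blast
  then have "circ (a 0) \<in> arc 0" using \<open>S1 \<subseteq> arc 0 \<union> _\<close> by auto
  then show False
    using circ_notin_circ_image_greaterThanLessThan ab[OF assms(2)] unfolding arc_def by blast
qed

lemma periodic_closed_set_gap:
  fixes N :: "real set"
  assumes N: "closed N" "s0 \<in> N" "\<And>s c. s \<in> N \<Longrightarrow> s + of_int c \<in> N" and y: "y \<notin> N"
  obtains \<alpha> \<beta> where "\<alpha> \<in> N" "\<beta> \<in> N" "\<alpha> < y" "y < \<beta>" "\<beta> \<le> \<alpha> + 1" "{\<alpha><..<\<beta>} \<inter> N = {}"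
proof -
  define L where "L = N \<inter> {..y}"
  define R where "R = N \<inter> {y..}"
  have "s0 + of_int (- \<lceil>s0 - y\<rceil>) \<in> N" "s0 + of_int \<lceil>y - s0\<rceil> \<in> N" using N(2,3) by blast+
  moreover have "s0 + of_int (- \<lceil>s0 - y\<rceil>) \<le> y" "y \<le> s0 + of_int \<lceil>y - s0\<rceil>" by linarith+
  ultimately have "s0 + of_int (- \<lceil>s0 - y\<rceil>) \<in> L" "s0 + of_int \<lceil>y - s0\<rceil> \<in> R"
    unfolding L_def R_def by simp_all
  moreover have "closed L" "closed R" "bdd_above L" "bdd_below R"
    unfolding L_def R_def using N(1) by (auto intro: closed_Int bdd_aboveI bdd_belowI)
  ultimately have "Sup L \<in> L" "Inf R \<in> R" using closed_contains_Sup closed_contains_Inf by blast+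
  define \<alpha> where "\<alpha> = Sup L"
  define \<beta> where "\<beta> = Inf R"
  have \<alpha>: "\<alpha> \<in> N" "\<alpha> < y" using \<open>Sup L \<in> L\<close> y unfolding \<alpha>_def L_def by (auto simp: order.order_iff_strict)
  have \<beta>: "\<beta> \<in> N" "y < \<beta>" using \<open>Inf R \<in> R\<close> y unfolding \<beta>_def R_def by (auto simp: order.order_iff_strict)
  have "\<alpha> + 1 \<in> N" using N(3)[OF \<alpha>(1), of 1] by simp
  then have "\<alpha> + 1 \<notin> L" using cSup_upper[OF _ \<open>bdd_above L\<close>, of "\<alpha> + 1"] unfolding \<alpha>_def by force
  then have "\<alpha> + 1 \<in> R" using \<open>\<alpha> + 1 \<in> N\<close> unfolding L_def R_def by auto
  then have "\<beta> \<le> \<alpha> + 1" unfolding \<beta>_def using \<open>bdd_below R\<close> by (rule cInf_lower)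
  moreover have "s \<notin> N" if "s \<in> {\<alpha><..<\<beta>}" for s
  proof
    assume "s \<in> N"
    show False
    proof (cases "s \<le> y")
      case True
      then have "s \<le> \<alpha>" unfolding \<alpha>_def using \<open>s \<in> N\<close> \<open>bdd_above L\<close> by (auto simp: L_def intro: cSup_upper)
      then show False using that by simp
    next
      case False
      then have "\<beta> \<le> s" unfolding \<beta>_def using \<open>s \<in> N\<close> \<open>bdd_below R\<close> by (auto simp: R_def intro: cInf_lower)
      then show False using that by simp
    qed
  qed
  then have "{\<alpha><..<\<beta>} \<inter> N = {}" by blast
  ultimately show thesis using that \<alpha> \<beta> by blast
qed

lemma S1_subset_circ_image_Icc_Un: "S1 \<subseteq> circ ` {\<alpha>..\<beta>} \<union> circ ` {\<beta>..\<alpha> + 1}"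
proof
  fix z assume "z \<in> S1"
  then obtain t where "z = circ t" "\<alpha> \<le> t" "t < \<alpha> + 1" by (rule S1_circE)
  then show "z \<in> circ ` {\<alpha>..\<beta>} \<union> circ ` {\<beta>..\<alpha> + 1}" by (cases "t \<le> \<beta>") auto
qed

lemma circ_image_Icc_Int:
  assumes "\<alpha> \<le> \<beta>" "\<beta> \<le> \<alpha> + 1"
  shows "circ ` {\<alpha>..\<beta>} \<inter> circ ` {\<beta>..\<alpha> + 1} \<subseteq> {circ \<alpha>, circ \<beta>}"
proof
  fix z assume "z \<in> circ ` {\<alpha>..\<beta>} \<inter> circ ` {\<beta>..\<alpha> + 1}"
  then have z: "z \<in> circ ` {\<alpha>..\<beta>}" "z \<in> circ ` {\<beta>..\<alpha> + 1}" by simp_all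
  obtain t1 where t1: "z = circ t1" "\<alpha> \<le> t1" "t1 \<le> \<beta>" using z(1) by auto
  obtain t2 where t2: "z = circ t2" "\<beta> \<le> t2" "t2 \<le> \<alpha> + 1" using z(2) by auto
  have "t2 - t1 \<in> \<int>" using t1(1) t2(1) by (simp add: circ_eq_iff)
  then have "t2 - t1 = 0 \<or> t2 - t1 = 1"
    using t1 t2 Ints_nonzero_abs_less1[of "t2 - t1 - 1"] by fastforce
  then show "z \<in> {circ \<alpha>, circ \<beta>}"
  proof
    assume "t2 - t1 = 0"
    then have "t1 = \<beta>" using t1 t2 by linarith
    then show ?thesis using t1 by simp
  next
    assume "t2 - t1 = 1"
    then have "t1 = \<alpha>" using t1 t2 by linarith
    then show ?thesis using t1 by simp
  qed
qed

lemma connected_component_in_circle_segment: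
  fixes A :: "complex set"
  assumes A: "A \<subseteq> S1" "open {s. circ s \<in> A}" "circ s0 \<notin> A" "circ y \<in> A"
    and w: "w \<in> connected_component_set A (circ y)"
  obtains s where "circ s = w" "\<And>u. min y s \<le> u \<Longrightarrow> u \<le> max y s \<Longrightarrow> circ u \<in> A"
proof -
  define N where "N = {s. circ s \<notin> A}"
  have "closed N" using A(2) unfolding N_def by (simp add: closed_def Collect_neg_eq)
  moreover have "s0 \<in> N" using A(3) unfolding N_def by simp
  moreover have "s + of_int c \<in> N" if "s \<in> N" for s c using that unfolding N_def by (simp add: circ_add_Ints)
  moreover have "y \<notin> N" using A(4) unfolding N_def by simp
  ultimately obtain \<alpha> \<beta> where "\<alpha> \<in> N" "\<beta> \<in> N" "\<alpha> < y" "y < \<beta>" "\<beta> \<le> \<alpha> + 1" "{\<alpha><..<\<beta>} \<inter> N = {}"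
    by (rule periodic_closed_set_gap)
  then have gap: "circ \<alpha> \<notin> A" "circ \<beta> \<notin> A" "\<alpha> < y" "y < \<beta>" "\<beta> \<le> \<alpha> + 1"
    and inside: "\<And>u. \<alpha> < u \<Longrightarrow> u < \<beta> \<Longrightarrow> circ u \<in> A"
    unfolding N_def by auto
  define c where "c = connected_component_set A (circ y)"
  define K1 where "K1 = circ ` {\<alpha>..\<beta>}"
  define K2 where "K2 = circ ` {\<beta>..\<alpha> + 1}"
  have "c \<subseteq> A" unfolding c_def by (rule connected_component_subset)
  have "K1 \<inter> K2 \<subseteq> {circ \<alpha>, circ \<beta>}"
    unfolding K1_def K2_def using gap by (intro circ_image_Icc_Int) auto
  then have "K1 \<inter> K2 \<inter> c = {}" using \<open>c \<subseteq> A\<close> gap(1,2) by blast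
  moreover have "c \<subseteq> K1 \<union> K2"
    using \<open>c \<subseteq> A\<close> A(1) S1_subset_circ_image_Icc_Un unfolding K1_def K2_def by blast
  moreover have "connected c" "closed K1" "closed K2"
    unfolding c_def K1_def K2_def by (simp_all add: closed_circ_image_Icc)
  ultimately have "K1 \<inter> c = {} \<or> K2 \<inter> c = {}" using connected_closedD by blast
  moreover have "circ y \<in> K1 \<inter> c" using gap A(4) unfolding K1_def c_def by auto
  ultimately have "c \<subseteq> K1" using \<open>c \<subseteq> K1 \<union> K2\<close> by blast
  then obtain s where s: "w = circ s" "\<alpha> \<le> s" "s \<le> \<beta>" using w unfolding K1_def c_def by auto
  moreover have "s \<noteq> \<alpha>" "s \<noteq> \<beta>" using s gap(1,2) w \<open>c \<subseteq> A\<close> unfolding c_def by auto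
  ultimately show thesis using that[of s] inside gap(3,4) by force
qed

section \<open>Vertical neighbourhoods of graphs\<close>

lemma open_vertical_reach:
  fixes W :: "(real \<times> real) set" and g :: "real \<Rightarrow> real"
  assumes W: "open W" and g: "continuous_on UNIV g"
  shows "open {(\<theta>, y). \<forall>s. min y (g \<theta>) \<le> s \<and> s \<le> max y (g \<theta>) \<longrightarrow> (\<theta>, s) \<in> W}"
    (is "open ?R")
  unfolding open_dist
proof (intro ballI)
  fix v0 assume "v0 \<in> ?R"
  then obtain \<theta>0 y0 where v0: "v0 = (\<theta>0, y0)"
    and seg0: "\<And>s. min y0 (g \<theta>0) \<le> s \<Longrightarrow> s \<le> max y0 (g \<theta>0) \<Longrightarrow> (\<theta>0, s) \<in> W" by auto
  define a0 where "a0 = min y0 (g \<theta>0)"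
  define b0 where "b0 = max y0 (g \<theta>0)"
  have "compact ((\<lambda>s. (\<theta>0, s)) ` {a0..b0})"
    by (intro compact_continuous_image compact_Icc continuous_intros)
  moreover have "(\<lambda>s. (\<theta>0, s)) ` {a0..b0} \<subseteq> \<Union>{W}" using seg0 unfolding a0_def b0_def by auto
  ultimately obtain \<epsilon> where \<epsilon>: "0 < \<epsilon>" "\<And>s. s \<in> {a0..b0} \<Longrightarrow> ball (\<theta>0, s) \<epsilon> \<subseteq> W"
    using Heine_Borel_lemma[of _ "{W}"] W by (metis (no_types, lifting) image_eqI singletonD)
  obtain \<delta> where \<delta>: "0 < \<delta>" "\<And>\<theta>. dist \<theta> \<theta>0 < \<delta> \<Longrightarrow> dist (g \<theta>) (g \<theta>0) < \<epsilon> / 2"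
    using g \<epsilon>(1) unfolding continuous_on_iff by (metis UNIV_I half_gt_zero)
  show "\<exists>e>0. \<forall>v. dist v v0 < e \<longrightarrow> v \<in> ?R"
  proof (intro exI[of _ "min \<delta> (\<epsilon> / 2)"] conjI allI impI)
    fix v assume dv: "dist v v0 < min \<delta> (\<epsilon> / 2)"
    obtain \<theta> y where v: "v = (\<theta>, y)" by fastforce
    have d: "\<bar>\<theta> - \<theta>0\<bar> < min \<delta> (\<epsilon> / 2)" "\<bar>y - y0\<bar> < min \<delta> (\<epsilon> / 2)"
      using dist_fst_le[of v v0] dist_snd_le[of v v0] dv v v0 by (simp_all add: dist_real_def)
    then have dg: "\<bar>g \<theta> - g \<theta>0\<bar> < \<epsilon> / 2" using \<delta>(2)[of \<theta>] by (simp add: dist_real_def)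
    have "(\<theta>, s) \<in> W" if s: "min y (g \<theta>) \<le> s" "s \<le> max y (g \<theta>)" for s
    proof -
      define s' where "s' = max a0 (min b0 s)"
      have "s' \<in> {a0..b0}" unfolding s'_def a0_def b0_def by auto
      have "\<bar>s - s'\<bar> < \<epsilon> / 2" using s d dg unfolding s'_def a0_def b0_def by (smt (verit))
      then have "dist (\<theta>, s) (\<theta>0, s') < \<epsilon>"
        using d dist_triangle[of "(\<theta>, s)" "(\<theta>0, s')" "(\<theta>0, s)"]
        by (simp add: dist_Pair_Pair dist_real_def)
      then show ?thesis using \<epsilon>(2)[OF \<open>s' \<in> {a0..b0}\<close>] by (auto simp: dist_commute)
    qed
    then show "v \<in> ?R" using v by auto
  qed (use \<delta>(1) \<epsilon>(1) in simp)
qed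

lemma connected_vertical_reach:
  fixes W :: "(real \<times> real) set" and g :: "real \<Rightarrow> real"
  assumes g: "continuous_on UNIV g" and graph_in: "\<And>\<theta>. (\<theta>, g \<theta>) \<in> W"
  shows "connected {(\<theta>, y). \<forall>s. min y (g \<theta>) \<le> s \<and> s \<le> max y (g \<theta>) \<longrightarrow> (\<theta>, s) \<in> W}"
    (is "connected ?R")
proof -
  define graph where "graph = (\<lambda>t. (t, g t)) ` UNIV"
  define reach where
    "reach v = graph \<union> (\<lambda>s. (fst v, s)) ` {min (snd v) (g (fst v))..max (snd v) (g (fst v))}" for v
  have "connected graph" unfolding graph_def
    by (intro connected_continuous_image connected_UNIV continuous_intros g)
  have connected_reach: "connected (reach v)" for v
  proof -
    have "(fst v, g (fst v)) \<in> graph \<inter> (\<lambda>s. (fst v, s)) ` {min (snd v) (g (fst v))..max (snd v) (g (fst v))}"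
      unfolding graph_def by auto
    then show ?thesis unfolding reach_def using \<open>connected graph\<close>
      by (intro connected_Un connected_continuous_image connected_Icc continuous_intros) auto
  qed
  have graph_R: "graph \<subseteq> ?R" unfolding graph_def using graph_in by auto
  have segment_R: "(\<lambda>s. (\<theta>, s)) ` {min y (g \<theta>)..max y (g \<theta>)} \<subseteq> ?R" if "(\<theta>, y) \<in> ?R" for \<theta> y
  proof
    fix v assume "v \<in> (\<lambda>s. (\<theta>, s)) ` {min y (g \<theta>)..max y (g \<theta>)}"
    then obtain y' where y': "v = (\<theta>, y')" "min y (g \<theta>) \<le> y'" "y' \<le> max y (g \<theta>)" by auto
    have "(\<theta>, s) \<in> W" if "min y' (g \<theta>) \<le> s" "s \<le> max y' (g \<theta>)" for s
    proof -
      have "min y (g \<theta>) \<le> s \<and> s \<le> max y (g \<theta>)" using y' that by linarith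
      then show ?thesis using \<open>(\<theta>, y) \<in> ?R\<close> by blast
    qed
    then show "v \<in> ?R" using y'(1) by blast
  qed
  have "reach v \<subseteq> ?R" if "v \<in> ?R" for v
    using graph_R segment_R[of "fst v" "snd v"] that unfolding reach_def by simp
  then have "\<Union>(reach ` ?R) \<subseteq> ?R" by (rule UN_least)
  moreover have "v \<in> reach v" for v unfolding reach_def by (cases v) auto
  then have "?R \<subseteq> \<Union>(reach ` ?R)" by blast
  ultimately have "?R = \<Union>(reach ` ?R)" by (rule antisym[rotated])
  moreover have "graph \<subseteq> \<Inter>(reach ` ?R)" unfolding reach_def by blast
  then have "\<Inter>(reach ` ?R) \<noteq> {}" unfolding graph_def by blast
  moreover have "connected (\<Union>(reach ` ?R))"
    using \<open>\<Inter>(reach ` ?R) \<noteq> {}\<close> connected_reach by (intro connected_Union) auto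
  ultimately show ?thesis by simp
qed

section \<open>Invariant tubes and their lifts\<close>

locale jumping_tube = fibred_lift +
  fixes p q :: nat and k :: int and l :: nat
    and U1 :: "(complex \<times> complex) set" and C :: "nat \<Rightarrow> (complex \<times> complex) set"
    and h :: "nat \<Rightarrow> nat \<Rightarrow> real \<Rightarrow> real" and m n :: nat
  assumes pq_tube: "pq_tube T p q U1"
    and curve_subset: "\<And>i. i < p \<Longrightarrow> C i \<subseteq> (T ^^ i) ` U1"
    and curve_meets_component: "\<And>i z c. i < p \<Longrightarrow> z \<in> S1 \<Longrightarrow>
      c \<in> components (tfibre ((T ^^ i) ` U1) z) \<Longrightarrow> card (c \<inter> tfibre (C i) z) = 1"
    and curve_lift_h: "\<And>i j. i < p \<Longrightarrow> j < q \<Longrightarrow> qcurve_lift q k (C i) (h i j)"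
    and h_at_0: "\<And>i j. i < p \<Longrightarrow> j < q \<Longrightarrow> 0 \<le> h i j 0 \<and> h i j 0 < 1"
    and h_at_0_order: "\<And>i j i' j'. i < p \<Longrightarrow> j < q \<Longrightarrow> i' < p \<Longrightarrow> j' < q \<Longrightarrow>
      i + j * p < i' + j' * p \<Longrightarrow> h i j 0 < h i' j' 0"
    and m_less: "m < p" and n_less: "n < q"
    and lift_component: "F ` connected_component_set (pi2 -` U1) (0, h 0 0 0)
      = connected_component_set (pi2 -` ((T ^^ m) ` U1)) (0, h m n 0)"
    and l_eq: "l = m + n * p"

lemma tube_wind_jump_imp_jumping_tube:
  assumes "T_hom \<omega> T" "tube_wind_jump \<omega> T p q k l U1"
  obtains C h m n F where "jumping_tube \<omega> T F p q k l U1 C h m n"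
proof -
  obtain C h m n F where
    "\<forall>i<p. C i \<subseteq> (T ^^ i) ` U1 \<and>
       (\<forall>z\<in>S1. \<forall>c\<in>components (tfibre ((T ^^ i) ` U1) z). card (c \<inter> tfibre (C i) z) = 1) \<and>
       (\<forall>j<q. qcurve_lift q k (C i) (h i j) \<and> 0 \<le> h i j 0 \<and> h i j 0 < 1)"
    "\<forall>i j i' j'. i < p \<longrightarrow> j < q \<longrightarrow> i' < p \<longrightarrow> j' < q \<longrightarrow>
       i + j * p < i' + j' * p \<longrightarrow> h i j 0 < h i' j' 0"
    "m < p" "n < q" "is_lift T F" "\<forall>\<theta> x. fst (F (\<theta>, x)) = \<theta> + \<omega>"
    "F ` connected_component_set (pi2 -` U1) (0, h 0 0 0)
       = connected_component_set (pi2 -` ((T ^^ m) ` U1)) (0, h m n 0)" "l = m + n * p"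
    "pq_tube T p q U1"
    using assms(2) unfolding tube_wind_jump_def by blast
  then have "jumping_tube \<omega> T F p q k l U1 C h m n"
    by unfold_locales (use assms(1) in auto)
  then show thesis by (rule that)
qed

context jumping_tube
begin

lemma p_pos: "0 < p" and q_pos: "0 < q"
  and U1_subset: "U1 \<subseteq> torus" and U1_openin: "openin (top_of_set torus) U1"
  and funpow_p_U1: "(T ^^ p) ` U1 = U1" and q_arcs_U1: "z \<in> S1 \<Longrightarrow> q_arcs q (tfibre U1 z)"
  using pq_tube unfolding pq_tube_def tube1_def by blast+

definition piece :: "nat \<Rightarrow> (complex \<times> complex) set" where
  "piece i = (T ^^ i) ` U1"

definition tube :: "(complex \<times> complex) set" where
  "tube = (\<Union>i<p. piece i)"

lemma piece_0: "piece 0 = U1" and piece_p: "piece p = U1"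
  using funpow_p_U1 by (simp_all add: piece_def)

lemma image_piece: "T ` piece i = piece (Suc i)"
  unfolding piece_def by (simp add: image_comp)

lemma pieces_disjoint: "i < p \<Longrightarrow> j < p \<Longrightarrow> v \<in> piece i \<Longrightarrow> v \<in> piece j \<Longrightarrow> i = j"
  using pq_tube unfolding pq_tube_def disjoint_family_on_def piece_def by blast

lemma piece_subset_torus: "piece i \<subseteq> torus"
  unfolding piece_def by (rule T_hom_funpow_subset_torus[OF T_hom U1_subset])

lemma open_vimage_piece: "open (pi2 -` piece i)"
  unfolding piece_def by (intro open_vimage_pi2 T_hom_funpow_openin[OF T_hom U1_openin])

lemma open_vimage_tube: "open (pi2 -` tube)"
  unfolding tube_def vimage_UN using open_vimage_piece by blast

lemma image_tube_subset: "T ` tube \<subseteq> tube"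
proof
  fix v assume "v \<in> T ` tube"
  then obtain i where "i < p" "v \<in> piece (Suc i)" unfolding tube_def image_piece[symmetric] by blast
  then show "v \<in> tube" unfolding tube_def using p_pos piece_p piece_0
    by (cases "Suc i = p") (auto simp: less_Suc_eq)
qed

lemma vimage_tube: "v \<in> torus \<Longrightarrow> T v \<in> tube \<Longrightarrow> v \<in> tube"
proof -
  assume v: "v \<in> torus" "T v \<in> tube"
  then obtain i where i: "i < p" "T v \<in> piece i" unfolding tube_def by blast
  define i' where "i' = (if i = 0 then p - 1 else i - 1)"
  have "i' < p" "piece (Suc i') = piece i" using i p_pos piece_p piece_0 by (auto simp: i'_def)
  then obtain u where "u \<in> piece i'" "T u = T v" using i(2) image_piece[of i'] by (metis imageE)
  then have "u = v" using T_hom_inj_on[OF T_hom] v(1) piece_subset_torus by (meson inj_onD subsetD)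
  then show "v \<in> tube" using \<open>u \<in> piece i'\<close> \<open>i' < p\<close> unfolding tube_def by blast
qed

lemma connected_in_one_piece:
  assumes "connected K" "K \<subseteq> pi2 -` tube" "x \<in> K"
  obtains i where "i < p" "K \<subseteq> pi2 -` piece i"
proof -
  obtain i where i: "i < p" "x \<in> pi2 -` piece i" using assms(2,3) unfolding tube_def by blast
  define B where "B = (\<Union>j\<in>{j. j < p \<and> j \<noteq> i}. pi2 -` piece j)"
  have "open B" unfolding B_def using open_vimage_piece by blast
  moreover have "pi2 -` piece i \<inter> B \<inter> K = {}" unfolding B_def using pieces_disjoint i(1) by blast
  moreover have "K \<subseteq> pi2 -` piece i \<union> B" using assms(2) unfolding B_def tube_def by blast
  ultimately have "K \<subseteq> pi2 -` piece i"
    using connected_subset_open_separation[OF assms(1) open_vimage_piece] i(2) assms(3) by blast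
  then show thesis using that i(1) by blast
qed

text \<open>A full fibre in the i-th piece would be carried by T^(p - i) into U1, whose fibres
  consist of q proper arcs.\<close>

lemma tube_fibre_not_full: "\<exists>s. pi2 (\<theta>, s) \<notin> tube"
proof (rule ccontr)
  assume "\<not> (\<exists>s. pi2 (\<theta>, s) \<notin> tube)"
  then have "(\<lambda>s. (\<theta>, s)) ` UNIV \<subseteq> pi2 -` tube" by auto
  moreover have "connected ((\<lambda>s. (\<theta>, s)) ` (UNIV :: real set))"
    by (intro connected_continuous_image connected_UNIV continuous_intros)
  ultimately obtain i where i: "i < p" "(\<lambda>s. (\<theta>, s)) ` UNIV \<subseteq> pi2 -` piece i"
    using connected_in_one_piece[of "(\<lambda>s. (\<theta>, s)) ` UNIV" "(\<theta>, 0)"] by blast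
  have "{circ \<theta>} \<times> S1 \<subseteq> piece i"
  proof
    fix v assume "v \<in> {circ \<theta>} \<times> S1"
    then obtain s where "v = pi2 (\<theta>, s)" unfolding pi2_def by (auto elim: S1_circE[where a = 0])
    then show "v \<in> piece i" using i(2) by auto
  qed
  then have "{circ (\<theta> + real (p - i) * \<omega>)} \<times> S1 \<subseteq> (T ^^ (p - i)) ` piece i"
    by (rule T_hom_funpow_full_fibre[OF T_hom])
  also have "(T ^^ (p - i)) ` piece i = U1"
    using i(1) funpow_p_U1 unfolding piece_def by (simp add: image_comp funpow_add[symmetric])
  finally have "tfibre U1 (circ (\<theta> + real (p - i) * \<omega>)) = S1"
    using U1_subset unfolding tfibre_def torus_def by auto
  then show False using q_arcs_ne_S1[OF q_arcs_U1[OF circ_in_S1] q_pos] by simp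
qed

text \<open>All lifts of the curves C i, enumerated in the order of their values at 0: writing
  N = r + c p q with 0 \<le> r < p q, curve_lift N = h (r mod p) (r div p) + c is a lift of
  C (r mod p).\<close>

definition lift_period :: int where
  "lift_period = int (p * q)"

definition curve_index :: "int \<Rightarrow> nat" where
  "curve_index N = nat (N mod lift_period) mod p"

definition curve_lift :: "int \<Rightarrow> real \<Rightarrow> real" where
  "curve_lift N t = h (nat (N mod lift_period) mod p) (nat (N mod lift_period) div p) t
     + of_int (N div lift_period)"

lemma lift_period_pos: "0 < lift_period"
  unfolding lift_period_def using p_pos q_pos by simp

lemma int_less_lift_period: "r < p * q \<Longrightarrow> int r < lift_period"
  unfolding lift_period_def by (simp only: of_nat_less_iff)

lemma index_less_pq: "i < p \<Longrightarrow> j < q \<Longrightarrow> i + j * p < p * q"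
proof -
  assume "i < p" "j < q"
  then have "i + j * p < p * (j + 1)" by (simp add: algebra_simps)
  also have "\<dots> \<le> p * q" using \<open>j < q\<close> by (intro mult_le_mono2) simp
  finally show ?thesis .
qed

lemma residue_less: "r < p * q \<Longrightarrow> r mod p < p" "r < p * q \<Longrightarrow> r div p < q"
  using p_pos by (simp_all add: less_mult_imp_div_less mult.commute)

lemma curve_index_decomposition:
  assumes "r < p * q"
  shows "curve_index (int r + c * lift_period) = r mod p"
    and "curve_lift (int r + c * lift_period) t = h (r mod p) (r div p) t + of_int c"
proof -
  have "int r < lift_period" using assms by (rule int_less_lift_period)
  then have "(int r + c * lift_period) mod lift_period = int r" "(int r + c * lift_period) div lift_period = c"
    by simp_all
  then show "curve_index (int r + c * lift_period) = r mod p"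
    "curve_lift (int r + c * lift_period) t = h (r mod p) (r div p) t + of_int c"
    unfolding curve_index_def curve_lift_def by simp_all
qed

lemma curve_index_decompE:
  obtains r c where "r < p * q" "N = int r + c * lift_period"
proof
  show "nat (N mod lift_period) < p * q"
    using lift_period_pos unfolding lift_period_def by (simp add: nat_less_iff)
  show "N = int (nat (N mod lift_period)) + N div lift_period * lift_period"
    using lift_period_pos mod_div_mult_eq[of N lift_period] by simp
qed

lemma curve_index_less: "curve_index N < p"
  unfolding curve_index_def using p_pos by simp

lemma qcurve_lift_curve_lift: "qcurve_lift q k (C (curve_index N)) (curve_lift N)"
proof -
  obtain r c where rc: "r < p * q" "N = int r + c * lift_period" by (rule curve_index_decompE)
  then have "curve_lift N = (\<lambda>t. h (r mod p) (r div p) t + of_int c)" "curve_index N = r mod p"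
    by (simp_all add: fun_eq_iff curve_index_decomposition)
  then show ?thesis
    using qcurve_lift_add_Ints[OF curve_lift_h[OF residue_less[OF rc(1)]], of "of_int c"] by simp
qed

lemma continuous_curve_lift: "continuous_on UNIV (curve_lift N)"
  by (rule qcurve_lift_continuous[OF qcurve_lift_curve_lift])

lemma curve_lift_in_curve: "pi2 (t, curve_lift N t) \<in> C (curve_index N)"
  using qcurve_lift_image[OF qcurve_lift_curve_lift[of N]] by blast

lemma curve_lift_in_piece: "pi2 (t, curve_lift N t) \<in> piece (curve_index N)"
  using curve_lift_in_curve curve_subset[OF curve_index_less] unfolding piece_def by blast

lemma curve_lift_in_tube: "pi2 (t, curve_lift N t) \<in> tube"
  using curve_lift_in_piece curve_index_less unfolding tube_def by blast

lemma curve_lift_add_period: "curve_lift (N + c * lift_period) t = curve_lift N t + of_int c"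
proof -
  obtain r c' where rc: "r < p * q" "N = int r + c' * lift_period" by (rule curve_index_decompE)
  have "curve_lift (N + c * lift_period) t = curve_lift (int r + (c' + c) * lift_period) t"
    using rc(2) by (simp add: algebra_simps)
  also have "\<dots> = h (r mod p) (r div p) t + of_int c' + of_int c"
    using curve_index_decomposition(2)[OF rc(1)] by simp
  also have "h (r mod p) (r div p) t + of_int c' = curve_lift N t"
    using curve_index_decomposition(2)[OF rc(1)] rc(2) by simp
  finally show ?thesis .
qed

lemma curve_lift_0_less:
  assumes "N < N'"
  shows "curve_lift N 0 < curve_lift N' 0"
proof -
  obtain r c where N: "r < p * q" "N = int r + c * lift_period" by (rule curve_index_decompE)
  obtain r' c' where N': "r' < p * q" "N' = int r' + c' * lift_period" by (rule curve_index_decompE)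
  have "int r < lift_period" "int r' < lift_period" using N N' int_less_lift_period by simp_all
  then have cc: "N div lift_period = c" "N' div lift_period = c'" using N(2) N'(2) by simp_all
  have "c \<le> c'" using zdiv_mono1[of N N' lift_period] assms lift_period_pos cc by simp
  then consider "c < c'" | "c = c'" "r < r'" using assms N(2) N'(2) by fastforce
  then show ?thesis
  proof cases
    case 1
    have "h (r mod p) (r div p) 0 < 1" "0 \<le> h (r' mod p) (r' div p) 0"
      using h_at_0 residue_less N(1) N'(1) by blast+
    then show ?thesis using 1 N N' by (simp add: curve_index_decomposition)
  next
    case 2
    then have "r mod p + r div p * p < r' mod p + r' div p * p" by simp
    then show ?thesis
      using 2 N N' h_at_0_order[OF residue_less[OF N(1)] residue_less[OF N'(1)]]
      by (simp add: curve_index_decomposition)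
  qed
qed

lemma curve_lift_0_inj: "curve_lift N 0 = curve_lift N' 0 \<Longrightarrow> N = N'"
  using curve_lift_0_less[of N N'] curve_lift_0_less[of N' N] by (cases N N' rule: linorder_cases) auto

definition segment_in_tube :: "real \<Rightarrow> real \<Rightarrow> real \<Rightarrow> bool" where
  "segment_in_tube \<theta> y y' \<longleftrightarrow> (\<forall>s. min y y' \<le> s \<and> s \<le> max y y' \<longrightarrow> pi2 (\<theta>, s) \<in> tube)"

lemma segment_in_tube_commute: "segment_in_tube \<theta> y y' \<longleftrightarrow> segment_in_tube \<theta> y' y"
  unfolding segment_in_tube_def by (simp add: min.commute max.commute)

lemma segment_in_tube_trans: "segment_in_tube \<theta> y z \<Longrightarrow> segment_in_tube \<theta> y' z \<Longrightarrow> segment_in_tube \<theta> y y'"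
  unfolding segment_in_tube_def by (smt (verit))

lemma segment_in_tube_refl: "pi2 (\<theta>, y) \<in> tube \<Longrightarrow> segment_in_tube \<theta> y y"
  unfolding segment_in_tube_def by auto

lemma segment_in_tube_subsegment:
  "segment_in_tube \<theta> y z \<Longrightarrow> min y z \<le> y' \<Longrightarrow> y' \<le> max y z \<Longrightarrow> segment_in_tube \<theta> y' z"
  unfolding segment_in_tube_def by (smt (verit))

lemma segment_in_tube_in_tube: "segment_in_tube \<theta> y z \<Longrightarrow> pi2 (\<theta>, y) \<in> tube"
  unfolding segment_in_tube_def by auto

lemma segment_in_tube_length_less_1:
  assumes "segment_in_tube \<theta> y y'"
  shows "\<bar>y - y'\<bar> < 1"
proof (rule ccontr)
  assume "\<not> \<bar>y - y'\<bar> < 1"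
  obtain s where s: "pi2 (\<theta>, s) \<notin> tube" using tube_fibre_not_full by blast
  define s' where "s' = s - of_int \<lfloor>s - min y y'\<rfloor>"
  have "min y y' \<le> s'" "s' \<le> max y y'" using \<open>\<not> \<bar>y - y'\<bar> < 1\<close> unfolding s'_def by linarith+
  then have "pi2 (\<theta>, s') \<in> tube" using assms unfolding segment_in_tube_def by blast
  moreover have "pi2 (\<theta>, s') = pi2 (\<theta>, s)" unfolding s'_def by (simp add: pi2_eq_iff)
  ultimately show False using s by simp
qed

text \<open>A vertical segment in the tube lies in one piece and in one component of its fibre,
  which meets the curve of that piece exactly once.\<close>

lemma segment_in_tube_curve_lifts_eq:
  assumes seg: "segment_in_tube \<theta> (curve_lift N \<theta>) (curve_lift N' \<theta>)"
  shows "N = N'"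
proof -
  define I where "I = {min (curve_lift N \<theta>) (curve_lift N' \<theta>)..max (curve_lift N \<theta>) (curve_lift N' \<theta>)}"
  have ends: "curve_lift N \<theta> \<in> I" "curve_lift N' \<theta> \<in> I" unfolding I_def by auto
  have "connected ((\<lambda>s. (\<theta>, s)) ` I)" unfolding I_def
    by (intro connected_continuous_image connected_Icc continuous_intros)
  moreover have "(\<lambda>s. (\<theta>, s)) ` I \<subseteq> pi2 -` tube" using seg unfolding I_def segment_in_tube_def by auto
  ultimately obtain i where i: "i < p" "(\<lambda>s. (\<theta>, s)) ` I \<subseteq> pi2 -` piece i"
    using connected_in_one_piece ends(1) by blast
  then have index: "curve_index N = i" "curve_index N' = i"
    using pieces_disjoint[OF curve_index_less i(1) curve_lift_in_piece] ends by blast+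
  define A where "A = tfibre (piece i) (circ \<theta>)"
  have IA: "circ ` I \<subseteq> A"
  proof
    fix z assume "z \<in> circ ` I"
    then obtain s where "z = circ s" "s \<in> I" by blast
    then have "pi2 (\<theta>, s) \<in> piece i" using i(2) by blast
    then show "z \<in> A" unfolding A_def \<open>z = circ s\<close> pi2_in_iff_tfibre .
  qed
  define c where "c = connected_component_set A (circ (curve_lift N \<theta>))"
  have "c \<in> components A" unfolding c_def using IA ends(1) by (intro componentsI) blast
  then have card: "card (c \<inter> tfibre (C i) (circ \<theta>)) = 1"
    using curve_meets_component[OF i(1) circ_in_S1] unfolding A_def piece_def by blast
  have "connected (circ ` I)" unfolding I_def by (intro connected_continuous_image connected_Icc continuous_intros)
  then have "circ ` I \<subseteq> c" unfolding c_def using IA ends(1) by (intro connected_component_maximal) auto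
  moreover have "circ (curve_lift M \<theta>) \<in> tfibre (C i) (circ \<theta>)" if "curve_index M = i" for M
    using curve_lift_in_curve[of \<theta> M] that by (simp add: pi2_in_iff_tfibre)
  ultimately have "circ (curve_lift N \<theta>) \<in> c \<inter> tfibre (C i) (circ \<theta>)"
    "circ (curve_lift N' \<theta>) \<in> c \<inter> tfibre (C i) (circ \<theta>)"
    using ends index by auto
  then have "circ (curve_lift N \<theta>) = circ (curve_lift N' \<theta>)" using card by (metis card_1_singletonE singletonD)
  then have "curve_lift N \<theta> - curve_lift N' \<theta> \<in> \<int>" by (simp add: circ_eq_iff)
  then have "curve_lift N \<theta> = curve_lift N' \<theta>"
    using segment_in_tube_length_less_1[OF seg] Ints_nonzero_abs_less1 by fastforce
  then have "curve_lift N' = curve_lift N"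
    using qcurve_lift_eqI[OF qcurve_lift_curve_lift[of N] _ q_pos] qcurve_lift_curve_lift[of N'] index
    by metis
  then show ?thesis using curve_lift_0_inj by metis
qed

lemma curve_lift_less:
  assumes "N < N'"
  shows "curve_lift N t < curve_lift N' t"
proof (rule ccontr)
  assume "\<not> curve_lift N t < curve_lift N' t"
  define f where "f = (\<lambda>x. curve_lift N' x - curve_lift N x)"
  have "continuous_on A f" for A
    unfolding f_def by (intro continuous_intros continuous_on_subset[OF continuous_curve_lift]) auto
  moreover have "0 \<le> f 0" "f t \<le> 0"
    using curve_lift_0_less[OF assms] \<open>\<not> curve_lift N t < curve_lift N' t\<close> unfolding f_def by auto
  ultimately obtain x where "f x = 0"
    using IVT'[of f t 0 0] IVT2'[of f t 0 0] by (cases "0 \<le> t") auto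
  then have "segment_in_tube x (curve_lift N x) (curve_lift N' x)"
    unfolding f_def by (simp add: segment_in_tube_refl curve_lift_in_tube)
  then show False using segment_in_tube_curve_lifts_eq assms by blast
qed

lemma qcurve_lift_eq_curve_lift:
  assumes i: "i < p" and g: "qcurve_lift q k (C i) g"
  obtains N where "curve_index N = i" "curve_lift N = g"
proof -
  have "\<exists>a c. a < q \<and> c \<in> \<int> \<and> (\<forall>t. h i j t = h i 0 (t + real a) + c)" if "j < q" for j
    using qcurve_lift_unique[OF curve_lift_h[OF i q_pos] curve_lift_h[OF i that] q_pos] by metis
  then obtain A D where AD: "\<And>j. j < q \<Longrightarrow> A j < q \<and> D j \<in> \<int> \<and> (\<forall>t. h i j t = h i 0 (t + real (A j)) + D j)"
    by metis
  have "inj_on A {..<q}"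
  proof
    fix j j' assume j: "j \<in> {..<q}" "j' \<in> {..<q}" "A j = A j'"
    then have "h i j 0 = h i 0 (0 + real (A j)) + D j" "h i j' 0 = h i 0 (0 + real (A j')) + D j'"
      "D j \<in> \<int>" "D j' \<in> \<int>"
      using AD by blast+
    then have "h i j 0 - h i j' 0 = D j - D j'" "D j - D j' \<in> \<int>" using j(3) by (simp_all add: Ints_diff)
    moreover have "\<bar>h i j 0 - h i j' 0\<bar> < 1" using h_at_0[OF i, of j] h_at_0[OF i, of j'] j by auto
    ultimately have "h i j 0 = h i j' 0" using Ints_nonzero_abs_less1 by fastforce
    then show "j = j'"
      using h_at_0_order[OF i _ i, of j j'] h_at_0_order[OF i _ i, of j' j] j(1,2) p_pos
      by (cases j j' rule: linorder_cases) auto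
  qed
  then have "A ` {..<q} = {..<q}" using AD by (intro endo_inj_surj) auto
  obtain a c where ac: "a < q" "c \<in> \<int>" "\<And>t. g t = h i 0 (t + real a) + c"
    using qcurve_lift_unique[OF curve_lift_h[OF i q_pos] g q_pos] by blast
  then obtain j where j: "j < q" "A j = a" using \<open>A ` {..<q} = {..<q}\<close> by (metis imageE lessThan_iff)
  then have "c - D j \<in> \<int>" using ac(2) AD by auto
  then obtain E :: int where E: "c - D j = of_int E" by (auto elim: Ints_cases)
  have "g = (\<lambda>t. h i j t + of_int E)" using ac(3) AD[OF j(1)] j(2) E by (auto simp: fun_eq_iff algebra_simps)
  moreover have "i + j * p < p * q" "(i + j * p) mod p = i" "(i + j * p) div p = j"
    using index_less_pq[OF i j(1)] i by simp_all
  ultimately show thesis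
    using that[of "int (i + j * p) + E * lift_period"] curve_index_decomposition[of "i + j * p" E] by auto
qed

lemma curve_point_on_curve_lift:
  assumes i: "i < p" and "pi2 (\<theta>, s) \<in> C i"
  obtains N where "curve_index N = i" "curve_lift N \<theta> = s"
proof -
  obtain t where "pi2 (\<theta>, s) = pi2 (t, h i 0 t)" using assms(2) qcurve_lift_image[OF curve_lift_h[OF i q_pos]] by blast
  then have ts: "t - \<theta> \<in> \<int>" "s - h i 0 t \<in> \<int>" by (auto simp: pi2_eq_iff Ints_diff_commute)
  have "qcurve_lift q k (C i) (\<lambda>x. h i 0 (x + (t - \<theta>)) + (s - h i 0 t))"
    by (intro qcurve_lift_add_Ints qcurve_lift_shift curve_lift_h i q_pos ts)
  then obtain N where "curve_index N = i" "curve_lift N = (\<lambda>x. h i 0 (x + (t - \<theta>)) + (s - h i 0 t))"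
    using qcurve_lift_eq_curve_lift[OF i] by blast
  then show thesis using that by simp
qed

text \<open>The strip N is the connected component of the lifted tube containing the graph of
  curve_lift N.\<close>

definition strip :: "int \<Rightarrow> (real \<times> real) set" where
  "strip N = {(\<theta>, y). segment_in_tube \<theta> y (curve_lift N \<theta>)}"

lemma mem_strip: "(\<theta>, y) \<in> strip N \<longleftrightarrow> segment_in_tube \<theta> y (curve_lift N \<theta>)"
  by (simp add: strip_def)

lemma curve_lift_in_strip: "(\<theta>, curve_lift N \<theta>) \<in> strip N"
  by (simp add: mem_strip segment_in_tube_refl curve_lift_in_tube)

lemma strip_subset_tube: "v \<in> strip N \<Longrightarrow> pi2 v \<in> tube"
  by (cases v) (simp add: mem_strip segment_in_tube_in_tube)

lemma strip_width: "(\<theta>, y) \<in> strip N \<Longrightarrow> \<bar>y - curve_lift N \<theta>\<bar> < 1"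
  by (simp add: mem_strip segment_in_tube_length_less_1)

lemma strips_disjoint:
  assumes "v \<in> strip N" "v \<in> strip N'"
  shows "N = N'"
proof -
  obtain \<theta> y where "v = (\<theta>, y)" by fastforce
  then have "segment_in_tube \<theta> (curve_lift N \<theta>) y" "segment_in_tube \<theta> (curve_lift N' \<theta>) y"
    using assms by (simp_all add: mem_strip segment_in_tube_commute)
  then show ?thesis by (rule segment_in_tube_curve_lifts_eq[OF segment_in_tube_trans])
qed

lemma strip_eq_vertical_reach:
  "strip N = {(\<theta>, y). \<forall>s. min y (curve_lift N \<theta>) \<le> s \<and> s \<le> max y (curve_lift N \<theta>) \<longrightarrow> (\<theta>, s) \<in> pi2 -` tube}"
  unfolding strip_def segment_in_tube_def by simp

lemma open_strip: "open (strip N)"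
  unfolding strip_eq_vertical_reach by (intro open_vertical_reach open_vimage_tube continuous_curve_lift)

lemma connected_strip: "connected (strip N)"
  unfolding strip_eq_vertical_reach
  by (intro connected_vertical_reach continuous_curve_lift) (simp add: curve_lift_in_tube)

lemma tube_subset_strips:
  assumes "pi2 (\<theta>, y) \<in> tube"
  obtains N where "(\<theta>, y) \<in> strip N"
proof -
  obtain i where i: "i < p" "pi2 (\<theta>, y) \<in> piece i" using assms unfolding tube_def by blast
  define A where "A = tfibre (piece i) (circ \<theta>)"
  have "A \<subseteq> S1" using piece_subset_torus unfolding A_def tfibre_def torus_def by auto
  moreover have "open {s. circ s \<in> A}"
  proof -
    have "{s. circ s \<in> A} = (\<lambda>s. (\<theta>, s)) -` (pi2 -` piece i)"
      unfolding A_def by (simp add: set_eq_iff pi2_in_iff_tfibre)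
    moreover have "continuous_on UNIV (\<lambda>s::real. (\<theta>, s))" by (intro continuous_intros)
    ultimately show ?thesis using open_vimage[OF open_vimage_piece] by metis
  qed
  moreover obtain s0 where "pi2 (\<theta>, s0) \<notin> tube" using tube_fibre_not_full by blast
  then have "circ s0 \<notin> A" using i(1) unfolding A_def tube_def by (auto simp: pi2_in_iff_tfibre)
  moreover have y: "circ y \<in> A" using i(2) unfolding A_def by (simp add: pi2_in_iff_tfibre)
  moreover define c where "c = connected_component_set A (circ y)"
  have "c \<in> components A" unfolding c_def using y by (rule componentsI)
  then have "card (c \<inter> tfibre (C i) (circ \<theta>)) = 1"
    using curve_meets_component[OF i(1) circ_in_S1] unfolding A_def piece_def by blast
  then obtain w where w: "w \<in> c" "w \<in> tfibre (C i) (circ \<theta>)" by (metis card_1_singletonE insert_iff Int_iff)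
  ultimately obtain s where s: "circ s = w" "\<And>u. min y s \<le> u \<Longrightarrow> u \<le> max y s \<Longrightarrow> circ u \<in> A"
    using connected_component_in_circle_segment unfolding c_def by metis
  have "pi2 (\<theta>, s) \<in> C i" using w(2) s(1) by (simp add: pi2_in_iff_tfibre)
  then obtain N where N: "curve_index N = i" "curve_lift N \<theta> = s"
    using curve_point_on_curve_lift[OF i(1)] by blast
  have "segment_in_tube \<theta> y s"
    unfolding segment_in_tube_def using s(2) i(1) unfolding A_def tube_def by (auto simp: pi2_in_iff_tfibre)
  then show thesis using that[of N] N by (simp add: mem_strip)
qed

lemma connected_subset_strip:
  assumes "connected K" "K \<subseteq> pi2 -` tube" "v \<in> K" "v \<in> strip N"
  shows "K \<subseteq> strip N"
proof -
  define B where "B = (\<Union>N'\<in>{N'. N' \<noteq> N}. strip N')"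
  have "open B" unfolding B_def using open_strip by blast
  moreover have "strip N \<inter> B \<inter> K = {}" unfolding B_def using strips_disjoint by blast
  moreover have "K \<subseteq> strip N \<union> B"
  proof
    fix u assume "u \<in> K"
    then obtain N' where "u \<in> strip N'"
      using assms(2) tube_subset_strips[of "fst u" "snd u"] by auto
    then show "u \<in> strip N \<union> B" unfolding B_def by (cases "N' = N") auto
  qed
  ultimately show ?thesis using connected_subset_open_separation[OF assms(1) open_strip] assms(3,4) by blast
qed

lemma strip_add_Ints:
  assumes "(\<theta>, y) \<in> strip N"
  shows "(\<theta>, y + of_int c) \<in> strip (N + c * lift_period)"
proof -
  have "pi2 (\<theta>, s) \<in> tube" if "min (y + of_int c) (curve_lift N \<theta> + of_int c) \<le> s"
    "s \<le> max (y + of_int c) (curve_lift N \<theta> + of_int c)" for s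
  proof -
    have "min y (curve_lift N \<theta>) \<le> s - of_int c \<and> s - of_int c \<le> max y (curve_lift N \<theta>)"
      using that by auto
    then have "pi2 (\<theta>, s - of_int c) \<in> tube" using assms by (simp add: mem_strip segment_in_tube_def)
    moreover have "pi2 (\<theta>, s - of_int c) = pi2 (\<theta>, s)" by (simp add: pi2_eq_iff)
    ultimately show ?thesis by simp
  qed
  then show ?thesis by (simp add: mem_strip segment_in_tube_def curve_lift_add_period)
qed

lemma strip_order:
  assumes a: "(\<theta>, y) \<in> strip a" and b: "(\<theta>, y') \<in> strip b" and "y < y'"
  shows "a \<le> b"
proof (rule ccontr)
  assume "\<not> a \<le> b"
  define ga gb where "ga = curve_lift a \<theta>" and "gb = curve_lift b \<theta>"
  have "gb < ga" using curve_lift_less \<open>\<not> a \<le> b\<close> unfolding ga_def gb_def by simp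
  define z where "z = max (min y ga) (min y' gb)"
  have "segment_in_tube \<theta> z ga"
    by (rule segment_in_tube_subsegment[OF a[unfolded mem_strip, folded ga_def]])
      (use \<open>gb < ga\<close> \<open>y < y'\<close> in \<open>auto simp: z_def\<close>)
  moreover have "segment_in_tube \<theta> z gb"
    by (rule segment_in_tube_subsegment[OF b[unfolded mem_strip, folded gb_def]])
      (use \<open>gb < ga\<close> \<open>y < y'\<close> in \<open>auto simp: z_def\<close>)
  ultimately have "segment_in_tube \<theta> ga gb"
    using segment_in_tube_trans segment_in_tube_commute by blast
  then show False using segment_in_tube_curve_lifts_eq \<open>\<not> a \<le> b\<close> unfolding ga_def gb_def by blast
qed

lemma lift_strip_ex: "\<exists>N'. F ` strip N \<subseteq> strip N'"
proof -
  have conn: "connected (F ` strip N)"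
    using is_lift_continuous[OF lift] by (intro connected_continuous_image connected_strip)
      (auto intro: continuous_on_subset)
  moreover have "F ` strip N \<subseteq> pi2 -` tube"
    using strip_subset_tube is_lift_pi2[OF lift] image_tube_subset by fastforce
  moreover have "F (0, curve_lift N 0) \<in> F ` strip N" using curve_lift_in_strip by blast
  moreover obtain \<theta> y where Fv: "F (0, curve_lift N 0) = (\<theta>, y)" by fastforce
  ultimately have "pi2 (\<theta>, y) \<in> tube" by auto
  then obtain N' where "(\<theta>, y) \<in> strip N'" by (rule tube_subset_strips)
  then show ?thesis
    using connected_subset_strip[OF \<open>connected (F ` strip N)\<close> \<open>F ` strip N \<subseteq> pi2 -` tube\<close>]
      \<open>F (0, curve_lift N 0) \<in> F ` strip N\<close> Fv by metis
qed

definition strip_shift :: "int \<Rightarrow> int" where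
  "strip_shift N = (SOME N'. F ` strip N \<subseteq> strip N')"

lemma lift_strip_shift: "v \<in> strip N \<Longrightarrow> F v \<in> strip (strip_shift N)"
  using someI_ex[OF lift_strip_ex[of N]] unfolding strip_shift_def by blast

lemma strip_shift_eqI: "v \<in> strip N \<Longrightarrow> F v \<in> strip N' \<Longrightarrow> strip_shift N = N'"
  using lift_strip_shift strips_disjoint by blast

lemma curve_lift_0: "curve_lift 0 = h 0 0" and curve_index_0: "curve_index 0 = 0"
  using curve_index_decomposition[of 0 0] p_pos q_pos by (simp_all add: fun_eq_iff)

lemma curve_lift_l: "curve_lift (int l) = h m n" and curve_index_l: "curve_index (int l) = m"
proof -
  have "l < p * q" using index_less_pq[OF m_less n_less] l_eq by simp
  moreover have "l mod p = m" "l div p = n" using l_eq m_less by simp_all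
  ultimately show "curve_lift (int l) = h m n" "curve_index (int l) = m"
    using curve_index_decomposition[of l 0] by (simp_all add: fun_eq_iff)
qed

lemma strip_shift_0: "strip_shift 0 = int l"
proof -
  have start: "(0, h 0 0 0) \<in> connected_component_set (pi2 -` U1) (0, h 0 0 0)"
    using curve_lift_in_piece[of 0 0] curve_lift_0 curve_index_0 piece_0 by simp
  have "connected_component_set (pi2 -` piece m) (0, h m n 0) \<subseteq> strip (int l)"
  proof (rule connected_subset_strip)
    show "connected_component_set (pi2 -` piece m) (0, h m n 0) \<subseteq> pi2 -` tube"
      using connected_component_subset[of "pi2 -` piece m"] m_less unfolding tube_def by blast
    show "(0, h m n 0) \<in> connected_component_set (pi2 -` piece m) (0, h m n 0)"
      using curve_lift_in_piece[of 0 "int l"] curve_lift_l curve_index_l by simp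
    show "(0, h m n 0) \<in> strip (int l)" using curve_lift_in_strip[of 0 "int l"] curve_lift_l by simp
  qed simp
  then have "F (0, h 0 0 0) \<in> strip (int l)"
    using lift_component start unfolding piece_def by blast
  moreover have "(0, h 0 0 0) \<in> strip 0" using curve_lift_in_strip[of 0 0] curve_lift_0 by simp
  ultimately show ?thesis by (rule strip_shift_eqI[rotated])
qed

lemma strip_shift_add_period: "strip_shift (N + lift_period) = strip_shift N + lift_period"
proof -
  define y where "y = curve_lift N 0"
  have "F (0, y) \<in> strip (strip_shift N)" unfolding y_def by (rule lift_strip_shift[OF curve_lift_in_strip])
  then have "(\<omega>, snd (F (0, y)) + of_int 1) \<in> strip (strip_shift N + 1 * lift_period)"
    using strip_add_Ints lift_Pair by (metis add_0)
  moreover have "F (0, y + 1) = (\<omega>, snd (F (0, y)) + 1)"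
    using lift_Pair[of 0 "y + 1"] lift_fibre_add_Ints[OF T_hom lift, of 1 0 y] by simp
  moreover have "(0, y + 1) \<in> strip (N + lift_period)"
    using curve_lift_in_strip[of 0 "N + lift_period"] curve_lift_add_period[of N 1 0] unfolding y_def by simp
  ultimately show ?thesis using strip_shift_eqI by fastforce
qed

lemma strip_shift_less_Suc: "strip_shift N < strip_shift (N + 1)"
proof -
  define y0 y1 where "y0 = curve_lift N 0" and "y1 = curve_lift (N + 1) 0"
  have "y0 < y1" unfolding y0_def y1_def by (simp add: curve_lift_less)
  then have Y: "snd (F (0, y0)) < snd (F (0, y1))" by (simp add: lift_fibre_less_iff[OF T_hom lift])
  have a: "(\<omega>, snd (F (0, y0))) \<in> strip (strip_shift N)"
    using lift_strip_shift[OF curve_lift_in_strip[of 0 N]] lift_Pair[of 0 y0] unfolding y0_def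
    by (metis add_0)
  have b: "(\<omega>, snd (F (0, y1))) \<in> strip (strip_shift (N + 1))"
    using lift_strip_shift[OF curve_lift_in_strip[of 0 "N + 1"]] lift_Pair[of 0 y1] unfolding y1_def
    by (metis add_0)
  have "strip_shift N \<noteq> strip_shift (N + 1)"
  proof
    assume "strip_shift N = strip_shift (N + 1)"
    then have "segment_in_tube \<omega> (snd (F (0, y0))) (curve_lift (strip_shift N) \<omega>)"
      "segment_in_tube \<omega> (snd (F (0, y1))) (curve_lift (strip_shift N) \<omega>)"
      using a b by (simp_all add: mem_strip)
    then have seg: "segment_in_tube \<omega> (snd (F (0, y0))) (snd (F (0, y1)))"
      by (rule segment_in_tube_trans)
    then have "pi2 (0, s) \<in> tube" if "y0 \<le> s" "s \<le> y1" for s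
    proof -
      have "snd (F (0, y0)) \<le> snd (F (0, s))" "snd (F (0, s)) \<le> snd (F (0, y1))"
        using that by (simp_all add: lift_fibre_le_iff[OF T_hom lift])
      then have "pi2 (\<omega>, snd (F (0, s))) \<in> tube" using seg Y unfolding segment_in_tube_def by auto
      moreover have "F (0, s) = (\<omega>, snd (F (0, s)))" using lift_Pair[of 0 s] by (metis add_0)
      ultimately have "pi2 (F (0, s)) \<in> tube" by metis
      then show ?thesis using vimage_tube is_lift_pi2[OF lift] pi2_in_torus by metis
    qed
    then have "segment_in_tube 0 (curve_lift N 0) (curve_lift (N + 1) 0)"
      using \<open>y0 < y1\<close> unfolding segment_in_tube_def y0_def y1_def by simp
    then show False using segment_in_tube_curve_lifts_eq by fastforce
  qed
  then show ?thesis using strip_order[OF a b Y] by simp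
qed

lemma strip_shift_add_nat: "strip_shift N + int d \<le> strip_shift (N + int d)"
proof (induction d)
  case (Suc d)
  then have "strip_shift N + int (Suc d) \<le> strip_shift (N + int d + 1)"
    using strip_shift_less_Suc[of "N + int d"] by simp
  then show ?case by (simp add: ac_simps)
qed simp

text \<open>strip_shift is strictly increasing, commutes with translation by lift_period and maps
  0 to l.\<close>

lemma strip_shift_eq: "strip_shift N = N + int l"
proof -
  have Suc: "strip_shift (N + 1) = strip_shift N + 1" for N
  proof -
    have "nat lift_period \<ge> 1" using lift_period_pos by simp
    then have "strip_shift (N + 1) + int (nat lift_period - 1) \<le> strip_shift N + lift_period"
      using strip_shift_add_nat[of "N + 1" "nat lift_period - 1"] strip_shift_add_period[of N]
      using lift_period_pos by (simp add: of_nat_diff algebra_simps)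
    then show ?thesis using strip_shift_less_Suc[of N] lift_period_pos by (simp add: of_nat_diff)
  qed
  show ?thesis
  proof (induction N rule: int_induct[where k = 0])
    case base
    then show ?case using strip_shift_0 by simp
  next
    case (step1 i)
    then show ?case using Suc[of i] by simp
  next
    case (step2 i)
    then show ?case using Suc[of "i - 1"] by simp
  qed
qed

lemma lift_strip: "v \<in> strip N \<Longrightarrow> F v \<in> strip (N + int l)"
  using lift_strip_shift strip_shift_eq by metis

lemma funpow_lift_strip: "v \<in> strip N \<Longrightarrow> (F ^^ j) v \<in> strip (N + int j * int l)"
proof (induction j)
  case (Suc j)
  then show ?case using lift_strip[OF Suc.IH[OF Suc.prems]] by (simp add: algebra_simps)
qed simp

lemma curve_lift_bounded_deviation:
  obtains B where "\<And>N t. \<bar>curve_lift N t - of_int k * t / real q - of_int N / real (p * q)\<bar> \<le> B"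
proof -
  have "\<exists>M. \<forall>t. \<bar>h i j t - of_int k * t / real q\<bar> \<le> M" if "i < p" "j < q" for i j
    using qcurve_lift_bounded_deviation[OF curve_lift_h[OF that] q_pos] by metis
  then obtain M where M: "\<And>i j t. i < p \<Longrightarrow> j < q \<Longrightarrow> \<bar>h i j t - of_int k * t / real q\<bar> \<le> M i j"
    by metis
  define B where "B = Max ((\<lambda>(i, j). M i j) ` ({..<p} \<times> {..<q})) + 1"
  have "\<bar>curve_lift N t - of_int k * t / real q - of_int N / real (p * q)\<bar> \<le> B" for N t
  proof -
    obtain r c where rc: "r < p * q" "N = int r + c * lift_period" by (rule curve_index_decompE)
    have "real r < real (p * q)" using rc(1) by (simp only: of_nat_less_iff)
    then have r: "0 \<le> real r / real (p * q)" "real r / real (p * q) < 1" by simp_all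
    have "M (r mod p) (r div p) \<le> Max ((\<lambda>(i, j). M i j) ` ({..<p} \<times> {..<q}))"
      by (rule Max_ge) (use residue_less[OF rc(1)] in auto)
    then have M_le: "M (r mod p) (r div p) \<le> B - 1" unfolding B_def by simp
    have h_dev: "\<bar>h (r mod p) (r div p) t - of_int k * t / real q\<bar> \<le> M (r mod p) (r div p)"
      using M residue_less[OF rc(1)] by blast
    have N_div: "of_int N / real (p * q) = real r / real (p * q) + of_int c"
      using rc(2) p_pos q_pos unfolding lift_period_def by (simp add: field_simps)
    have "curve_lift N t = h (r mod p) (r div p) t + of_int c"
      using rc by (simp add: curve_index_decomposition)
    then show ?thesis using r M_le h_dev N_div by (simp only: abs_le_iff) linarith
  qed
  then show thesis by (rule that)
qed

definition tube_rotation :: real where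
  "tube_rotation = of_int k / real q * \<omega> + real l / real (p * q)"

lemma orbit_deviation_bounded:
  obtains K where "\<And>j. \<bar>snd ((F ^^ j) (\<theta>, x)) - x - real j * tube_rotation\<bar> \<le> K"
proof -
  obtain B where B: "\<And>N t. \<bar>curve_lift N t - of_int k * t / real q - of_int N / real (p * q)\<bar> \<le> B"
    using curve_lift_bounded_deviation by blast
  define g where "g = curve_lift 0 \<theta>"
  define c where "c = \<lfloor>x - g\<rfloor>"
  define K where "K = 2 + B + \<bar>of_int k * \<theta> / real q\<bar> + \<bar>g\<bar>"
  have "\<bar>snd ((F ^^ j) (\<theta>, x)) - x - real j * tube_rotation\<bar> \<le> K" for j
  proof -
    define t where "t = \<theta> + real j * \<omega>"
    have "(F ^^ j) (\<theta>, g) \<in> strip (int j * int l)"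
      using funpow_lift_strip[OF curve_lift_in_strip[of \<theta> 0]] unfolding g_def by simp
    moreover have "(F ^^ j) (\<theta>, g) = (t, snd ((F ^^ j) (\<theta>, g)))"
      using fst_funpow[of j "(\<theta>, g)"] unfolding t_def by (metis fst_conv prod.collapse)
    ultimately have "\<bar>snd ((F ^^ j) (\<theta>, g)) - curve_lift (int j * int l) t\<bar> < 1"
      using strip_width by metis
    then have width: "\<bar>snd ((F ^^ j) (\<theta>, g)) - curve_lift (int j * int l) t\<bar> < 1"
      using strip_width by metis
    have rot: "real j * tube_rotation
        = of_int k * t / real q - of_int k * \<theta> / real q + of_int (int j * int l) / real (p * q)"
      unfolding tube_rotation_def t_def using q_pos by (simp add: field_simps)
    have xg: "g + of_int c \<le> x" "x \<le> g + of_int c + 1" unfolding c_def by linarith+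
    then have orbits: "snd ((F ^^ j) (\<theta>, g)) + of_int c \<le> snd ((F ^^ j) (\<theta>, x))"
      "snd ((F ^^ j) (\<theta>, x)) \<le> snd ((F ^^ j) (\<theta>, g)) + of_int c + 1"
      using funpow_snd_mono[of "g + of_int c" x j \<theta>] funpow_snd_mono[of x "g + of_int c + 1" j \<theta>]
        funpow_snd_add_Ints[of "of_int c" j \<theta> g] funpow_snd_add_Ints[of "of_int c + 1" j \<theta> g]
      by (simp_all add: add.assoc)
    show ?thesis
      using width rot xg orbits B[of "int j * int l" t] unfolding K_def
      by (simp only: abs_le_iff abs_less_iff) (smt (verit) abs_ge_self abs_ge_minus_self)
  qed
  then show thesis by (rule that)
qed

lemma rotation_limit: "(\<lambda>j. (snd ((F ^^ j) (\<theta>, x)) - x) / real j) \<longlonglongrightarrow> tube_rotation"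
proof -
  obtain K where K: "\<And>j. \<bar>snd ((F ^^ j) (\<theta>, x)) - x - real j * tube_rotation\<bar> \<le> K"
    using orbit_deviation_bounded[of \<theta> x] by blast
  have "(\<lambda>j. (snd ((F ^^ j) (\<theta>, x)) - x) / real j - tube_rotation) \<longlonglongrightarrow> 0"
  proof (rule Lim_null_comparison)
    have "norm ((snd ((F ^^ j) (\<theta>, x)) - x) / real j - tube_rotation) \<le> K / real j" if "j \<ge> 1" for j
    proof -
      have "(snd ((F ^^ j) (\<theta>, x)) - x) / real j - tube_rotation
          = (snd ((F ^^ j) (\<theta>, x)) - x - real j * tube_rotation) / real j"
        using that by (simp add: field_simps)
      then show ?thesis using K[of j] that by (simp add: abs_divide divide_right_mono)
    qed
    then show "eventually (\<lambda>j. norm ((snd ((F ^^ j) (\<theta>, x)) - x) / real j - tube_rotation) \<le> K / real j)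
        sequentially"
      by (rule eventually_sequentiallyI)
    show "(\<lambda>j. K / real j) \<longlonglongrightarrow> 0" by (rule lim_const_over_n)
  qed
  then show ?thesis by (simp add: LIM_zero_iff)
qed

lemma rot_num_tube: "rot_num T = frac tube_rotation"
  using rotation_limit by (rule rot_num_eqI)

lemma coprime_winding: "coprime k (int q)"
  by (rule qcurve_lift_coprime[OF curve_lift_h[OF p_pos q_pos] q_pos])

lemma m_eq: "m = (if p = 1 then 0 else 1)"
proof (cases "p = 1")
  case False
  have "(0, h 0 0 0) \<in> pi2 -` U1"
    using curve_lift_in_piece[of 0 0] curve_lift_0 curve_index_0 piece_0 by simp
  then have "F (0, h 0 0 0) \<in> F ` connected_component_set (pi2 -` U1) (0, h 0 0 0)" by simp
  then have "F (0, h 0 0 0) \<in> connected_component_set (pi2 -` piece m) (0, h m n 0)"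
    using lift_component unfolding piece_def by simp
  then have "F (0, h 0 0 0) \<in> pi2 -` piece m" using connected_component_subset by blast
  moreover have "pi2 (F (0, h 0 0 0)) \<in> piece 1"
    using is_lift_pi2[OF lift] \<open>(0, h 0 0 0) \<in> pi2 -` U1\<close> image_piece[of 0] piece_0 by auto
  ultimately show ?thesis using pieces_disjoint[OF m_less] False p_pos by simp
qed (use m_less in simp)

lemma l_less: "l < p * q"
  using index_less_pq[OF m_less n_less] l_eq by simp

end

lemma tube_wind_jump_rot_num:
  assumes "T_hom \<omega> T" "tube_wind_jump \<omega> T p q k l U1"
  shows "rot_num T = frac (of_int k / real q * \<omega> + real l / real (p * q))"
proof -
  obtain C h m n F where "jumping_tube \<omega> T F p q k l U1 C h m n"
    by (rule tube_wind_jump_imp_jumping_tube[OF assms])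
  then show ?thesis using jumping_tube.rot_num_tube jumping_tube.tube_rotation_def by metis
qed

lemma tube_wind_jump_invariants:
  assumes "T_hom \<omega> T" "tube_wind_jump \<omega> T p q k l U1"
  obtains n where "0 < p" "0 < q" "coprime k (int q)" "l < p * q"
    "l = (if p = 1 then 0 else 1) + n * p"
proof -
  obtain C h m n F where "jumping_tube \<omega> T F p q k l U1 C h m n"
    by (rule tube_wind_jump_imp_jumping_tube[OF assms])
  then interpret jumping_tube \<omega> T F p q k l U1 C h m n .
  show thesis using that[of n] p_pos q_pos coprime_winding l_less l_eq m_eq by simp
qed

section \<open>Uniqueness of the invariants\<close>

lemma irrational_affine_frac_eq:
  fixes \<omega> a b a' b' :: real
  assumes "\<omega> \<notin> \<rat>" "a \<in> \<rat>" "b \<in> \<rat>" "a' \<in> \<rat>" "b' \<in> \<rat>"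
    and "frac (a * \<omega> + b) = frac (a' * \<omega> + b')"
  shows "a = a'" "frac b = frac b'"
proof -
  obtain z :: int where z: "a * \<omega> + b = a' * \<omega> + b' + of_int z" using assms(6) by (rule frac_eqE)
  show "a = a'"
  proof (rule ccontr)
    assume "a \<noteq> a'"
    have "(a - a') * \<omega> = b' + of_int z - b" using z by (simp add: algebra_simps)
    then have "\<omega> = (b' + of_int z - b) / (a - a')" using \<open>a \<noteq> a'\<close> by (simp add: eq_divide_eq mult.commute)
    moreover have "(b' + of_int z - b) / (a - a') \<in> \<rat>"
      using assms(2-5) by (intro Rats_divide Rats_diff Rats_add Rats_of_int)
    ultimately show False using assms(1) by simp
  qed
  then have "b = b' + of_int z" using z by simp
  then show "frac b = frac b'" by simp
qed

lemma coprime_fraction_eq: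
  fixes k k' :: int and q q' :: nat
  assumes "coprime k (int q)" "coprime k' (int q')" "0 < q" "0 < q'"
    and "of_int k / real q = of_int k' / real q'"
  shows "q = q'" "k = k'"
proof -
  have "k * int q' = k' * int q"
    using assms(3-5) by (simp add: field_simps) (metis of_int_eq_iff of_int_mult of_int_of_nat_eq)
  then have "int q dvd int q'" "int q' dvd int q"
    using assms(1,2) by (metis coprime_commute coprime_dvd_mult_right_iff dvd_triv_right)+
  then show "q = q'" by (simp add: dvd_antisym)
  then show "k = k'" using \<open>k * int q' = k' * int q\<close> assms(3) by simp
qed

lemma jumping_number_unique:
  fixes p p' n n' :: nat
  assumes "0 < p" "0 < p'" "l * p' = l' * p"
    and "l = (if p = 1 then 0 else 1) + n * p" "l' = (if p' = 1 then 0 else 1) + n' * p'"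
  shows "p = p'"
proof -
  have "p dvd p'" if "p \<noteq> 1" "l * p' = l' * p" "l = 1 + n * p" for p p' l l' n :: nat
  proof -
    have "p dvd (1 + n * p) * p'" using that by (metis dvd_triv_right)
    then show ?thesis by (simp add: algebra_simps dvd_add_left_iff)
  qed
  moreover have "p = 1 \<longleftrightarrow> p' = 1"
  proof
    assume "p = 1"
    show "p' = 1"
    proof (rule ccontr)
      assume "p' \<noteq> 1"
      then have "p' dvd 1" using calculation[of p' l' p l n'] assms \<open>p = 1\<close> by simp
      then show False using \<open>p' \<noteq> 1\<close> by simp
    qed
  next
    assume "p' = 1"
    show "p = 1"
    proof (rule ccontr)
      assume "p \<noteq> 1"
      then have "p dvd 1" using calculation[of p l p' l' n] assms \<open>p' = 1\<close> by simp
      then show False using \<open>p \<noteq> 1\<close> by simp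
    qed
  qed
  ultimately show ?thesis using assms by (metis dvd_antisym)
qed

lemma tube_invariants_unique:
  fixes \<omega> :: real and p q p' q' n n' l l' :: nat and k k' :: int
  assumes \<omega>: "\<omega> \<notin> \<rat>"
    and I: "0 < p" "0 < q" "coprime k (int q)" "l < p * q" "l = (if p = 1 then 0 else 1) + n * p"
    and I': "0 < p'" "0 < q'" "coprime k' (int q')" "l' < p' * q'" "l' = (if p' = 1 then 0 else 1) + n' * p'"
    and eq: "frac (of_int k / real q * \<omega> + real l / real (p * q))
      = frac (of_int k' / real q' * \<omega> + real l' / real (p' * q'))"
  shows "p = p' \<and> q = q' \<and> k = k' \<and> l = l'"
proof -
  have "of_int k / real q = of_int k' / real q'"
    and frac_eq: "frac (real l / real (p * q)) = frac (real l' / real (p' * q'))"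
    using irrational_affine_frac_eq[OF \<omega> _ _ _ _ eq] by simp_all
  then have "q = q'" "k = k'" using coprime_fraction_eq I(2,3) I'(2,3) by blast+
  have "real l < real (p * q)" "real l' < real (p' * q')" using I(4) I'(4) by (simp_all only: of_nat_less_iff)
  then have "real l / real (p * q) \<in> {0..<1}" "real l' / real (p' * q') \<in> {0..<1}" by simp_all
  then have "real l / real (p * q) = real l' / real (p' * q)" using frac_eq \<open>q = q'\<close> by simp
  then have "l * p' = l' * p"
    using I(1,2) I'(1) by (simp add: field_simps) (metis of_nat_eq_iff of_nat_mult)
  moreover have "p = p'" using jumping_number_unique[OF I(1) I'(1) calculation I(5) I'(5)] .
  ultimately show ?thesis using \<open>q = q'\<close> \<open>k = k'\<close> I(1) by simp
qed

theorem mainTheorem5: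
  fixes \<omega> :: real
  assumes "0 \<le> \<omega>" and "\<omega> < 1" and "\<omega> \<notin> \<rat>"
  shows "(\<forall>T p q k l U1. T_hom \<omega> T \<and> tube_wind_jump \<omega> T p q k l U1 \<longrightarrow>
            rot_num T = frac (of_int k / real q * \<omega> + real l / real (p * q)))
       \<and> (\<forall>T T' p q k l U1 p' q' k' l' U1'.
            T_hom \<omega> T \<and> T_hom \<omega> T' \<and> rot_num T = rot_num T' \<and>
            tube_wind_jump \<omega> T p q k l U1 \<and> tube_wind_jump \<omega> T' p' q' k' l' U1' \<longrightarrow>
            p = p' \<and> q = q' \<and> k = k' \<and> l = l')"
proof (rule conjI; intro allI impI)
  fix T p q k l U1
  assume "T_hom \<omega> T \<and> tube_wind_jump \<omega> T p q k l U1"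
  then show "rot_num T = frac (of_int k / real q * \<omega> + real l / real (p * q))"
    using tube_wind_jump_rot_num by blast
next
  fix T T' p q k l U1 p' q' k' l' U1'
  assume H: "T_hom \<omega> T \<and> T_hom \<omega> T' \<and> rot_num T = rot_num T' \<and>
    tube_wind_jump \<omega> T p q k l U1 \<and> tube_wind_jump \<omega> T' p' q' k' l' U1'"
  obtain n n' where "0 < p" "0 < q" "coprime k (int q)" "l < p * q" "l = (if p = 1 then 0 else 1) + n * p"
    "0 < p'" "0 < q'" "coprime k' (int q')" "l' < p' * q'" "l' = (if p' = 1 then 0 else 1) + n' * p'"
    using tube_wind_jump_invariants H by metis
  moreover have "frac (of_int k / real q * \<omega> + real l / real (p * q))
      = frac (of_int k' / real q' * \<omega> + real l' / real (p' * q'))"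
    using H tube_wind_jump_rot_num by metis
  ultimately show "p = p' \<and> q = q' \<and> k = k' \<and> l = l'" by (rule tube_invariants_unique[OF assms(3)])
qed

end
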